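(* Let $n,m,p,N$ be positive integers, $A\in\mathbb{R}^{n\times n}$, $B\in\mathbb{R}^{n\times m}$, $C\in\mathbb{R}^{p\times n}$, $D\in\mathbb{R}^{p\times p}$ with $DD^T\succ 0$, and let $\mathcal{O}_N,\mathcal{O}_N^R,\mathcal{R}_N,\mathcal{D}_N,\mathcal{H}_N,\mathcal{L}_N,M_N,\tilde\phi_N,S_\Phi^{-1},\mathcal{Q}_\Phi,\Omega_\Phi,W_\Phi$ be as defined in the context. Let $\Phi_1,\Phi_2$ be symmetric $Nn\times Nn$ matrices with $0\preceq \Phi_2\preceq \Phi_1\prec \tilde\phi_N I_{Nn}$. Then $$\Omega_{\Phi_1}\preceq \Omega_{\Phi_2}\qquad\text{and}\qquad W_{\Phi_1}\succeq W_{\Phi_2}.$$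
   Context: $\preceq,\prec$ denote the Loewner order on symmetric matrices; $\lambda_1(\cdot)$ is the largest eigenvalue; $\otimes$ is the Kronecker product. Define the block matrices $\mathcal{R}_N=[\,B\ \ AB\ \cdots\ A^{N-1}B\,]\in\mathbb{R}^{n\times Nm}$, $\mathcal{O}_N=[\,(CA^{N-1})^T\ \cdots\ (CA)^T\ \ C^T\,]^T\in\mathbb{R}^{Np\times n}$, $\mathcal{O}_N^R=[\,(A^{N-1})^T\ \cdots\ A^T\ \ I_n\,]^T\in\mathbb{R}^{Nn\times n}$, $\mathcal{D}_N=I_N\otimes D$. With $H_t=CA^{t-1}B$ and $L_t=A^{t-1}B$ for $t\ge 1$, let $\mathcal{H}_N$ (size $Np\times Nm$) and $\mathcal{L}_N$ (size $Nn\times Nm$) be the block upper-triangular Toeplitz matrices whose $(i,j)$ block ($i,j=1,\dots,N$) is $H_{j-i}$, resp. $L_{j-i}$, for $j>i$ and $0$ for $j\le i$. Let $M_N=\mathcal{L}_N(I_{Nm}+\mathcal{H}_N^T(\mathcal{D}_N\mathcal{D}_N^T)^{-1}\mathcal{H}_N)^{-1}\mathcal{L}_N^T$ and $\tilde\phi_N=1/\lambda_1(M_N)$ (interpreted as $+\infty$ if $M_N=0$). For a symmetric $\Phi$ with $0\preceq\Phi\prec\tilde\phi_N I_{Nn}$ define $S_\Phi=-\Phi^{-1}+M_N$ (for invertible $\Phi$) and its inverse $S_\Phi^{-1}=-\Phi(I_{Nn}-M_N\Phi)^{-1}$ (this formula is used for all such $\Phi$, so that $S_0^{-1}=0$); $\mathcal{Q}_\Phi=[\,I_{Nm}+\mathcal{H}_N^T(\mathcal{D}_N\mathcal{D}_N^T)^{-1}\mathcal{H}_N-\mathcal{L}_N^T\Phi\mathcal{L}_N\,]^{-1}$;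 $\mathcal{J}_N=\mathcal{O}_N^R-\mathcal{L}_N\mathcal{H}_N^T[\mathcal{D}_N\mathcal{D}_N^T+\mathcal{H}_N\mathcal{H}_N^T]^{-1}\mathcal{O}_N$; $\Omega_N=\mathcal{O}_N^T(\mathcal{D}_N\mathcal{D}_N^T+\mathcal{H}_N\mathcal{H}_N^T)^{-1}\mathcal{O}_N$; $\Omega_\Phi=\Omega_N+\mathcal{J}_N^TS_\Phi^{-1}\mathcal{J}_N$ and $W_\Phi=\mathcal{R}_N\mathcal{Q}_\Phi\mathcal{R}_N^T$. *)

theory Defs
  imports "Jordan_Normal_Form.Matrix" "Jordan_Normal_Form.Gauss_Jordan_Elimination"
    "Jordan_Normal_Form.Char_Poly"
begin

(* Inverse of a square matrix (meaningful when the matrix is invertible). *)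
definition minv :: "real mat \<Rightarrow> real mat" where
  "minv X = the (mat_inverse X)"

definition psd :: "real mat \<Rightarrow> bool" where
  "psd X \<longleftrightarrow> X \<in> carrier_mat (dim_row X) (dim_row X) \<and> transpose_mat X = X \<and>
     (\<forall>v \<in> carrier_vec (dim_row X). v \<bullet> (X *\<^sub>v v) \<ge> 0)"

definition pd :: "real mat \<Rightarrow> bool" where
  "pd X \<longleftrightarrow> X \<in> carrier_mat (dim_row X) (dim_row X) \<and> transpose_mat X = X \<and>
     (\<forall>v \<in> carrier_vec (dim_row X). v \<noteq> 0\<^sub>v (dim_row X) \<longrightarrow> v \<bullet> (X *\<^sub>v v) > 0)"

definition loewner_le :: "real mat \<Rightarrow> real mat \<Rightarrow> bool" (infix "\<preceq>\<^sub>L" 50) where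
  "X \<preceq>\<^sub>L Y \<longleftrightarrow> dim_row X = dim_row Y \<and> dim_col X = dim_col Y \<and> psd (Y - X)"

definition loewner_lt :: "real mat \<Rightarrow> real mat \<Rightarrow> bool" (infix "\<prec>\<^sub>L" 50) where
  "X \<prec>\<^sub>L Y \<longleftrightarrow> dim_row X = dim_row Y \<and> dim_col X = dim_col Y \<and> pd (Y - X)"

definition lambda_max :: "real mat \<Rightarrow> real" where
  "lambda_max X = Max {k. eigenvalue X k}"

(* block matrix with R x C blocks of size rb x cb, block (i,j) (0-based) being f i j *)
definition block_mat :: "nat \<Rightarrow> nat \<Rightarrow> nat \<Rightarrow> nat \<Rightarrow> (nat \<Rightarrow> nat \<Rightarrow> real mat) \<Rightarrow> real mat" where
  "block_mat R C rb cb f = mat (R * rb) (C * cb)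
     (\<lambda>(i, j). f (i div rb) (j div cb) $$ (i mod rb, j mod cb))"

definition RN :: "real mat \<Rightarrow> real mat \<Rightarrow> nat \<Rightarrow> nat \<Rightarrow> nat \<Rightarrow> real mat" where
  "RN A B n m N = block_mat 1 N n m (\<lambda>i j. (A ^\<^sub>m j) * B)"

definition ON :: "real mat \<Rightarrow> real mat \<Rightarrow> nat \<Rightarrow> nat \<Rightarrow> nat \<Rightarrow> real mat" where
  "ON A C n p N = block_mat N 1 p n (\<lambda>i j. C * (A ^\<^sub>m (N - 1 - i)))"

definition ONR :: "real mat \<Rightarrow> nat \<Rightarrow> nat \<Rightarrow> real mat" where
  "ONR A n N = block_mat N 1 n n (\<lambda>i j. A ^\<^sub>m (N - 1 - i))"

definition DN :: "real mat \<Rightarrow> nat \<Rightarrow> nat \<Rightarrow> real mat" where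
  "DN D p N = block_mat N N p p (\<lambda>i j. if i = j then D else 0\<^sub>m p p)"

definition HN :: "real mat \<Rightarrow> real mat \<Rightarrow> real mat \<Rightarrow> nat \<Rightarrow> nat \<Rightarrow> nat \<Rightarrow> nat \<Rightarrow> real mat" where
  "HN A B C n m p N = block_mat N N p m
     (\<lambda>i j. if i < j then C * (A ^\<^sub>m (j - i - 1)) * B else 0\<^sub>m p m)"

definition LN :: "real mat \<Rightarrow> real mat \<Rightarrow> nat \<Rightarrow> nat \<Rightarrow> nat \<Rightarrow> real mat" where
  "LN A B n m N = block_mat N N n m
     (\<lambda>i j. if i < j then (A ^\<^sub>m (j - i - 1)) * B else 0\<^sub>m n m)"

definition MN :: "real mat \<Rightarrow> real mat \<Rightarrow> real mat \<Rightarrow> real mat \<Rightarrow> nat \<Rightarrow> nat \<Rightarrow> nat \<Rightarrow> nat \<Rightarrow> real mat" where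
  "MN A B C D n m p N =
     (let H = HN A B C n m p N; L = LN A B n m N; DD = DN D p N in
      L * minv (1\<^sub>m (N * m) + transpose_mat H * minv (DD * transpose_mat DD) * H) * transpose_mat L)"

(* the condition \<Phi> \<prec> phi_tilde_N I, with phi_tilde_N = 1 / lambda_1(M_N) (= +\<infinity> if M_N = 0) *)
definition below_phi_tilde :: "real mat \<Rightarrow> nat \<Rightarrow> real mat \<Rightarrow> bool" where
  "below_phi_tilde M k Phi \<longleftrightarrow>
     (if M = 0\<^sub>m k k then True else Phi \<prec>\<^sub>L ((1 / lambda_max M) \<cdot>\<^sub>m 1\<^sub>m k))"

definition SinvN :: "real mat \<Rightarrow> real mat \<Rightarrow> real mat \<Rightarrow> real mat \<Rightarrow> nat \<Rightarrow> nat \<Rightarrow> nat \<Rightarrow> nat \<Rightarrow> real mat \<Rightarrow> real mat" where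
  "SinvN A B C D n m p N Phi =
     - (Phi * minv (1\<^sub>m (N * n) - MN A B C D n m p N * Phi))"

definition QN :: "real mat \<Rightarrow> real mat \<Rightarrow> real mat \<Rightarrow> real mat \<Rightarrow> nat \<Rightarrow> nat \<Rightarrow> nat \<Rightarrow> nat \<Rightarrow> real mat \<Rightarrow> real mat" where
  "QN A B C D n m p N Phi =
     (let H = HN A B C n m p N; L = LN A B n m N; DD = DN D p N in
      minv (1\<^sub>m (N * m) + transpose_mat H * minv (DD * transpose_mat DD) * H
            - transpose_mat L * Phi * L))"

definition JN :: "real mat \<Rightarrow> real mat \<Rightarrow> real mat \<Rightarrow> real mat \<Rightarrow> nat \<Rightarrow> nat \<Rightarrow> nat \<Rightarrow> nat \<Rightarrow> real mat" where
  "JN A B C D n m p N =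
     (let H = HN A B C n m p N; L = LN A B n m N; DD = DN D p N in
      ONR A n N - L * transpose_mat H * minv (DD * transpose_mat DD + H * transpose_mat H) * ON A C n p N)"

definition OmegaN :: "real mat \<Rightarrow> real mat \<Rightarrow> real mat \<Rightarrow> real mat \<Rightarrow> nat \<Rightarrow> nat \<Rightarrow> nat \<Rightarrow> nat \<Rightarrow> real mat" where
  "OmegaN A B C D n m p N =
     (let H = HN A B C n m p N; DD = DN D p N; Ob = ON A C n p N in
      transpose_mat Ob * minv (DD * transpose_mat DD + H * transpose_mat H) * Ob)"

definition OmegaPhi :: "real mat \<Rightarrow> real mat \<Rightarrow> real mat \<Rightarrow> real mat \<Rightarrow> nat \<Rightarrow> nat \<Rightarrow> nat \<Rightarrow> nat \<Rightarrow> real mat \<Rightarrow> real mat" where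
  "OmegaPhi A B C D n m p N Phi =
     OmegaN A B C D n m p N
     + transpose_mat (JN A B C D n m p N) * SinvN A B C D n m p N Phi * JN A B C D n m p N"

definition WPhi :: "real mat \<Rightarrow> real mat \<Rightarrow> real mat \<Rightarrow> real mat \<Rightarrow> nat \<Rightarrow> nat \<Rightarrow> nat \<Rightarrow> nat \<Rightarrow> real mat \<Rightarrow> real mat" where
  "WPhi A B C D n m p N Phi =
     RN A B n m N * QN A B C D n m p N Phi * transpose_mat (RN A B n m N)"

end

(*
  Put K = I + H_N^T (D_N D_N^T)^-1 H_N, which is positive definite; then M_N = L_N K^-1 L_N^T and
  Q_Phi = (K - L_N^T Phi L_N)^-1.  Cauchy-Schwarz for the inner product of K, together with
  w^T M_N w <= lambda_1(M_N) |w|^2, gives |L_N u|^2 <= lambda_1(M_N) u^T K u, so the hypothesis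
  Phi_1 < lambda_1(M_N)^-1 I makes the gap K - L_N^T Phi_1 L_N positive definite, and the gap for
  Phi_2 <= Phi_1 is larger.  Inversion is antitone on positive definite matrices, whence
  W_Phi2 <= W_Phi1.  Positivity of the gap for Phi_1 also yields M_N Phi_1 M_N <= M_N, which makes
  I - M_N Phi invertible and Phi |-> Phi (I - M_N Phi)^-1 = -S_Phi^-1 monotone from Phi_2 to Phi_1;
  conjugating by J_N gives Omega_Phi1 <= Omega_Phi2.
  The bound by lambda_1 holds because the supremum mu of the Rayleigh quotient of M is an
  eigenvalue: otherwise mu I - M would be positive semidefinite and invertible, hence coercive.
*)

theory Submission
  imports Defs
begin

section \<open>Quadratic forms and the Loewner order\<close>

lemma scalar_prod_self_nonneg: "0 \<le> (v :: real vec) \<bullet> v"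
  using conjugate_square_ge_0_vec[of v] by simp

lemma scalar_prod_self_pos:
  assumes "(v :: real vec) \<in> carrier_vec d" "v \<noteq> 0\<^sub>v d"
  shows "0 < v \<bullet> v"
  using conjugate_square_greater_0_vec[OF assms(1)] assms(2) by simp

lemma mult_mat_vec_zero:
  assumes "(A :: 'a :: semiring_0 mat) \<in> carrier_mat r c"
  shows "A *\<^sub>v 0\<^sub>v c = 0\<^sub>v r"
  using assms by (intro eq_vecI) auto

lemma bilinear_form_symmetric:
  assumes "(X :: real mat) \<in> carrier_mat d d" "transpose_mat X = X"
    and "x \<in> carrier_vec d" "y \<in> carrier_vec d"
  shows "y \<bullet> (X *\<^sub>v x) = x \<bullet> (X *\<^sub>v y)"
  using transpose_vec_mult_scalar[OF assms(1,3,4)] assms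
  by (metis comm_scalar_prod mult_mat_vec_carrier)

lemma bilinear_form_congruence:
  assumes "(T :: real mat) \<in> carrier_mat c r" "S \<in> carrier_mat c c"
    and "x \<in> carrier_vec r" "y \<in> carrier_vec r"
  shows "y \<bullet> ((transpose_mat T * S * T) *\<^sub>v x) = (T *\<^sub>v y) \<bullet> (S *\<^sub>v (T *\<^sub>v x))"
proof -
  have "(transpose_mat T * S * T) *\<^sub>v x = transpose_mat T *\<^sub>v (S *\<^sub>v (T *\<^sub>v x))"
    using assms by (simp add: assoc_mult_mat_vec[of _ r c _ r] assoc_mult_mat_vec[of _ r c _ c])
  then show ?thesis
    using assms transpose_vec_mult_scalar[of "transpose_mat T" r c "S *\<^sub>v (T *\<^sub>v x)" y] by simp
qed

lemma symmetric_if_bilinear_form_symmetric: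
  assumes X: "(X :: real mat) \<in> carrier_mat d d"
    and form: "\<And>x y. x \<in> carrier_vec d \<Longrightarrow> y \<in> carrier_vec d \<Longrightarrow> y \<bullet> (X *\<^sub>v x) = x \<bullet> (X *\<^sub>v y)"
  shows "transpose_mat X = X"
proof (rule eq_matI)
  fix i j assume "i < dim_row X" "j < dim_col X"
  then have ij: "i < d" "j < d" using X by auto
  have entry: "unit_vec d a \<bullet> (X *\<^sub>v unit_vec d b) = X $$ (a, b)" if "a < d" "b < d" for a b
    using X that by (simp add: scalar_prod_left_unit scalar_prod_right_unit)
  show "transpose_mat X $$ (i, j) = X $$ (i, j)"
    using ij X form[of "unit_vec d j" "unit_vec d i"] entry[of i j] entry[of j i] by simp
qed (use X in auto)

lemma psdI:
  assumes "X \<in> carrier_mat d d" "transpose_mat X = X"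
    and "\<And>v. v \<in> carrier_vec d \<Longrightarrow> 0 \<le> v \<bullet> (X *\<^sub>v v)"
  shows "psd X"
  using assms unfolding psd_def by auto

lemma psdD:
  assumes "psd X" "X \<in> carrier_mat d d"
  shows "transpose_mat X = X" "\<And>v. v \<in> carrier_vec d \<Longrightarrow> 0 \<le> v \<bullet> (X *\<^sub>v v)"
  using assms unfolding psd_def by auto

lemma pdI:
  assumes "X \<in> carrier_mat d d" "transpose_mat X = X"
    and "\<And>v. v \<in> carrier_vec d \<Longrightarrow> v \<noteq> 0\<^sub>v d \<Longrightarrow> 0 < v \<bullet> (X *\<^sub>v v)"
  shows "pd X"
  using assms unfolding pd_def by auto

lemma pdD:
  assumes "pd X" "X \<in> carrier_mat d d"
  shows "transpose_mat X = X" "\<And>v. v \<in> carrier_vec d \<Longrightarrow> v \<noteq> 0\<^sub>v d \<Longrightarrow> 0 < v \<bullet> (X *\<^sub>v v)"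
  using assms unfolding pd_def by auto

lemma pd_imp_psd:
  assumes "pd X" "X \<in> carrier_mat d d"
  shows "psd X"
proof (rule psdI[OF assms(2) pdD(1)[OF assms]])
  fix v :: "real vec" assume "v \<in> carrier_vec d"
  then show "0 \<le> v \<bullet> (X *\<^sub>v v)"
    using pdD(2)[OF assms] assms(2) by (cases "v = 0\<^sub>v d") (auto intro: less_imp_le)
qed

lemma pd_injective:
  assumes "pd X" "X \<in> carrier_mat d d" "v \<in> carrier_vec d" "X *\<^sub>v v = 0\<^sub>v d"
  shows "v = 0\<^sub>v d"
  using pdD(2)[OF assms(1,2) assms(3)] assms(3,4) by fastforce

lemma minv_inverse:
  assumes X: "(X :: real mat) \<in> carrier_mat d d"
    and inj: "\<And>v. v \<in> carrier_vec d \<Longrightarrow> X *\<^sub>v v = 0\<^sub>v d \<Longrightarrow> v = 0\<^sub>v d"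
  shows "minv X \<in> carrier_mat d d" "X * minv X = 1\<^sub>m d" "minv X * X = 1\<^sub>m d"
proof -
  have "det X \<noteq> 0" using det_0_iff_vec_prod_zero[OF X] inj by auto
  then have "X \<in> Units (ring_mat TYPE(real) d d)" by (rule det_non_zero_imp_unit[OF X])
  then obtain Y where "mat_inverse X = Some Y" using mat_inverse(1)[OF X, of d] by blast
  then show "minv X \<in> carrier_mat d d" "X * minv X = 1\<^sub>m d" "minv X * X = 1\<^sub>m d"
    using mat_inverse(2)[OF X] unfolding minv_def by auto
qed

lemma minv_mult_vec_cancel:
  assumes "(X :: real mat) \<in> carrier_mat d d" "X * minv X = 1\<^sub>m d" "minv X \<in> carrier_mat d d"
    and "v \<in> carrier_vec d"
  shows "X *\<^sub>v (minv X *\<^sub>v v) = v"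
  using assms by (simp flip: assoc_mult_mat_vec[of _ d d _ d])

lemma pd_minv:
  assumes pd: "pd X" and X: "X \<in> carrier_mat d d"
  shows "pd (minv X)"
proof -
  note inv = minv_inverse[OF X pd_injective[OF pd X]]
  have cancel: "X *\<^sub>v (minv X *\<^sub>v v) = v" if "v \<in> carrier_vec d" for v
    using minv_mult_vec_cancel[OF X inv(2,1) that] .
  have form: "y \<bullet> (minv X *\<^sub>v x) = (minv X *\<^sub>v y) \<bullet> (X *\<^sub>v (minv X *\<^sub>v x))"
    if "x \<in> carrier_vec d" "y \<in> carrier_vec d" for x y
    using that inv(1) cancel[of y] comm_scalar_prod[of y d "minv X *\<^sub>v x"]
      bilinear_form_symmetric[OF X pdD(1)[OF pd X], of "minv X *\<^sub>v x" "minv X *\<^sub>v y"]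
    by (simp add: cancel)
  show ?thesis
  proof (rule pdI[OF inv(1)])
    show "transpose_mat (minv X) = minv X"
    proof (rule symmetric_if_bilinear_form_symmetric[OF inv(1)])
      fix x y :: "real vec" assume "x \<in> carrier_vec d" "y \<in> carrier_vec d"
      then show "y \<bullet> (minv X *\<^sub>v x) = x \<bullet> (minv X *\<^sub>v y)"
        using form inv(1) bilinear_form_symmetric[OF X pdD(1)[OF pd X]] by (metis mult_mat_vec_carrier)
    qed
  next
    fix v :: "real vec" assume v: "v \<in> carrier_vec d" "v \<noteq> 0\<^sub>v d"
    have "minv X *\<^sub>v v \<noteq> 0\<^sub>v d"
    proof
      assume "minv X *\<^sub>v v = 0\<^sub>v d"
      then have "v = X *\<^sub>v 0\<^sub>v d" using cancel[OF v(1)] by simp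
      also have "\<dots> = 0\<^sub>v d" by (rule mult_mat_vec_zero[OF X])
      finally show False using v(2) by simp
    qed
    then show "0 < v \<bullet> (minv X *\<^sub>v v)"
      using form[OF v(1) v(1)] pdD(2)[OF pd X, of "minv X *\<^sub>v v"] inv(1) v(1) by simp
  qed
qed

lemma psd_congruence:
  assumes "psd S" "S \<in> carrier_mat c c" "(T :: real mat) \<in> carrier_mat c r"
  shows "psd (transpose_mat T * S * T)"
proof (rule psdI)
  show "transpose_mat T * S * T \<in> carrier_mat r r" using assms by simp
  show "transpose_mat (transpose_mat T * S * T) = transpose_mat T * S * T"
  proof -
    have "transpose_mat (transpose_mat T * S * T) = transpose_mat T * transpose_mat (transpose_mat T * S)"
      using assms by (intro transpose_mult[of _ r c]) auto
    also have "transpose_mat (transpose_mat T * S) = transpose_mat S * T"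
      using assms by (subst transpose_mult[of _ r c _ c]) auto
    finally show ?thesis
      using assms psdD(1)[OF assms(1,2)] by (simp add: assoc_mult_mat[of _ r c _ c _ r])
  qed
  fix v :: "real vec" assume v: "v \<in> carrier_vec r"
  have "0 \<le> (T *\<^sub>v v) \<bullet> (S *\<^sub>v (T *\<^sub>v v))"
    using psdD(2)[OF assms(1,2)] assms(3) v by simp
  then show "0 \<le> v \<bullet> ((transpose_mat T * S * T) *\<^sub>v v)"
    unfolding bilinear_form_congruence[OF assms(3,2) v v] .
qed

lemma pd_one: "pd (1\<^sub>m d :: real mat)"
  by (rule pdI) (auto intro: scalar_prod_self_pos)

lemma pd_add_psd:
  assumes "pd X" "psd Y" "X \<in> carrier_mat d d" "Y \<in> carrier_mat d d"
  shows "pd (X + Y)"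
proof (rule pdI)
  show "X + Y \<in> carrier_mat d d" "transpose_mat (X + Y) = X + Y"
    using assms pdD(1)[OF assms(1,3)] psdD(1)[OF assms(2,4)] by (auto simp: transpose_add)
  fix v :: "real vec" assume "v \<in> carrier_vec d" "v \<noteq> 0\<^sub>v d"
  then show "0 < v \<bullet> ((X + Y) *\<^sub>v v)"
    using assms pdD(2)[OF assms(1,3)] psdD(2)[OF assms(2,4)]
    by (simp add: add_mult_distrib_mat_vec[of _ d d] scalar_prod_add_distrib[of _ d] add_pos_nonneg)
qed

lemma loewner_leI:
  assumes X: "X \<in> carrier_mat d d" and Y: "Y \<in> carrier_mat d d"
    and "transpose_mat X = X" "transpose_mat Y = Y"
    and le: "\<And>v. v \<in> carrier_vec d \<Longrightarrow> v \<bullet> (X *\<^sub>v v) \<le> v \<bullet> (Y *\<^sub>v v)"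
  shows "X \<preceq>\<^sub>L Y"
proof -
  have "psd (Y - X)"
  proof (rule psdI)
    show "Y - X \<in> carrier_mat d d" "transpose_mat (Y - X) = Y - X"
      using assms by (auto simp: transpose_minus)
    fix v :: "real vec" assume "v \<in> carrier_vec d"
    then show "0 \<le> v \<bullet> ((Y - X) *\<^sub>v v)"
      using X Y le by (simp add: minus_mult_distrib_mat_vec[of _ d d] scalar_prod_minus_distrib[of _ d])
  qed
  then show ?thesis using X Y unfolding loewner_le_def by auto
qed

lemma loewner_leD:
  assumes "X \<preceq>\<^sub>L Y" "X \<in> carrier_mat d d" "v \<in> carrier_vec d"
  shows "v \<bullet> (X *\<^sub>v v) \<le> v \<bullet> (Y *\<^sub>v v)"
proof -
  have Y: "Y \<in> carrier_mat d d" and psd: "psd (Y - X)"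
    using assms unfolding loewner_le_def by auto
  have "0 \<le> v \<bullet> ((Y - X) *\<^sub>v v)" using psdD(2)[OF psd minus_carrier_mat[OF assms(2)] assms(3)] .
  then show ?thesis
    using assms(2,3) Y by (simp add: minus_mult_distrib_mat_vec[of _ d d] scalar_prod_minus_distrib[of _ d])
qed

lemma psd_if_zero_loewner_le:
  assumes "0\<^sub>m d d \<preceq>\<^sub>L X" "X \<in> carrier_mat d d"
  shows "psd X"
proof -
  have "X - 0\<^sub>m d d = X" using assms(2) by (intro eq_matI) auto
  then show ?thesis using assms(1) unfolding loewner_le_def by simp
qed

lemma pd_if_zero_loewner_lt:
  assumes "0\<^sub>m d d \<prec>\<^sub>L X" "X \<in> carrier_mat d d"
  shows "pd X"
proof -
  have "X - 0\<^sub>m d d = X" using assms(2) by (intro eq_matI) auto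
  then show ?thesis using assms(1) unfolding loewner_lt_def by simp
qed

lemma loewner_le_symmetric:
  assumes "X \<preceq>\<^sub>L Y" "X \<in> carrier_mat d d" "transpose_mat X = X"
  shows "transpose_mat Y = Y"
proof -
  have Y: "Y \<in> carrier_mat d d" and psd: "psd (Y - X)"
    using assms unfolding loewner_le_def by auto
  have "Y = X + (Y - X)" using assms(2) Y by (intro eq_matI) auto
  moreover have "transpose_mat (Y - X) = Y - X" using psdD(1)[OF psd minus_carrier_mat[OF assms(2)]] .
  moreover have "Y - X \<in> carrier_mat d d" using minus_carrier_mat[OF assms(2)] .
  ultimately show ?thesis
    using assms(2,3) transpose_add[OF assms(2), of "Y - X"] by metis
qed

lemma psd_loewner_mono:
  assumes "psd X" "X \<preceq>\<^sub>L Y" "X \<in> carrier_mat d d"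
  shows "psd Y"
proof (rule psdI)
  show Y: "Y \<in> carrier_mat d d" using assms unfolding loewner_le_def by auto
  show "transpose_mat Y = Y" by (rule loewner_le_symmetric[OF assms(2,3) psdD(1)[OF assms(1,3)]])
  fix v :: "real vec" assume "v \<in> carrier_vec d"
  then show "0 \<le> v \<bullet> (Y *\<^sub>v v)"
    using psdD(2)[OF assms(1,3)] loewner_leD[OF assms(2,3)] order_trans by blast
qed

lemma pd_loewner_mono:
  assumes "pd X" "X \<preceq>\<^sub>L Y" "X \<in> carrier_mat d d"
  shows "pd Y"
proof (rule pdI)
  show Y: "Y \<in> carrier_mat d d" using assms unfolding loewner_le_def by auto
  show "transpose_mat Y = Y" by (rule loewner_le_symmetric[OF assms(2,3) pdD(1)[OF assms(1,3)]])
  fix v :: "real vec" assume "v \<in> carrier_vec d" "v \<noteq> 0\<^sub>v d"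
  then show "0 < v \<bullet> (Y *\<^sub>v v)"
    using pdD(2)[OF assms(1,3)] loewner_leD[OF assms(2,3)] less_le_trans by blast
qed

lemma loewner_le_add_left:
  assumes "X \<preceq>\<^sub>L Y" "X \<in> carrier_mat d d" "Z \<in> carrier_mat d d"
  shows "Z + X \<preceq>\<^sub>L Z + Y"
proof -
  have "Y \<in> carrier_mat d d" using assms unfolding loewner_le_def by auto
  then have "(Z + Y) - (Z + X) = Y - X" using assms(2,3) by (intro eq_matI) auto
  then show ?thesis using assms unfolding loewner_le_def by auto
qed

lemma loewner_le_minus_left:
  assumes "X \<preceq>\<^sub>L Y" "X \<in> carrier_mat d d" "Z \<in> carrier_mat d d"
  shows "Z - Y \<preceq>\<^sub>L Z - X"
proof -
  have "Y \<in> carrier_mat d d" using assms unfolding loewner_le_def by auto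
  then have "(Z - X) - (Z - Y) = Y - X" using assms(2,3) by (intro eq_matI) auto
  then show ?thesis using assms unfolding loewner_le_def by auto
qed

lemma loewner_le_uminus:
  assumes "X \<preceq>\<^sub>L Y" "X \<in> carrier_mat d d"
  shows "- Y \<preceq>\<^sub>L - X"
proof -
  have "Y \<in> carrier_mat d d" using assms unfolding loewner_le_def by auto
  then have "(- X) - (- Y) = Y - X" using assms(2) by (intro eq_matI) auto
  then show ?thesis using assms unfolding loewner_le_def by auto
qed

lemma loewner_le_congruence:
  assumes "X \<preceq>\<^sub>L Y" "X \<in> carrier_mat c c" "(T :: real mat) \<in> carrier_mat c r"
  shows "transpose_mat T * X * T \<preceq>\<^sub>L transpose_mat T * Y * T"
proof -
  have Y: "Y \<in> carrier_mat c c" and psd: "psd (Y - X)"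
    using assms unfolding loewner_le_def by auto
  have "transpose_mat T * (Y - X) * T = transpose_mat T * Y * T - transpose_mat T * X * T"
    using assms(2,3) Y
    by (simp add: mult_minus_distrib_mat[of _ r c] minus_mult_distrib_mat[of _ r c _ _ r])
  then have "psd (transpose_mat T * Y * T - transpose_mat T * X * T)"
    using psd_congruence[OF psd minus_carrier_mat[OF assms(2)] assms(3)] by simp
  then show ?thesis using assms(2,3) Y unfolding loewner_le_def by simp
qed

lemma quadratic_form_add_smult:
  assumes "(B :: real mat) \<in> carrier_mat d d" "x \<in> carrier_vec d" "y \<in> carrier_vec d"
  shows "(y + t \<cdot>\<^sub>v x) \<bullet> (B *\<^sub>v (y + t \<cdot>\<^sub>v x))
    = y \<bullet> (B *\<^sub>v y) + t * (y \<bullet> (B *\<^sub>v x)) + t * (x \<bullet> (B *\<^sub>v y)) + t\<^sup>2 * (x \<bullet> (B *\<^sub>v x))"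
  using assms
  by (simp add: mult_add_distrib_mat_vec[of _ d d] mult_mat_vec[of _ d d] add_scalar_prod_distrib[of _ d]
      scalar_prod_add_distrib[of _ d] power2_eq_square algebra_simps)

text \<open>The usual discriminant argument: the quadratic polynomial
  \<open>t \<mapsto> (y + t x)\<^sup>T B (y + t x)\<close> is nonnegative.\<close>

lemma psd_cauchy_schwarz:
  assumes psd: "psd B" and B: "B \<in> carrier_mat d d"
    and x: "x \<in> carrier_vec d" and y: "y \<in> carrier_vec d"
  shows "(y \<bullet> (B *\<^sub>v x))\<^sup>2 \<le> (y \<bullet> (B *\<^sub>v y)) * (x \<bullet> (B *\<^sub>v x))"
proof -
  define a where "a = x \<bullet> (B *\<^sub>v x)"
  define b where "b = y \<bullet> (B *\<^sub>v x)"
  define c where "c = y \<bullet> (B *\<^sub>v y)"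
  have nonneg: "0 \<le> c + 2 * t * b + t\<^sup>2 * a" for t
  proof -
    have "0 \<le> (y + t \<cdot>\<^sub>v x) \<bullet> (B *\<^sub>v (y + t \<cdot>\<^sub>v x))" using psdD(2)[OF psd B] x y by simp
    also have "\<dots> = c + 2 * t * b + t\<^sup>2 * a"
      using quadratic_form_add_smult[OF B x y] bilinear_form_symmetric[OF B psdD(1)[OF psd B] x y]
      unfolding a_def b_def c_def by simp
    finally show ?thesis .
  qed
  have "b\<^sup>2 \<le> c * a"
  proof (cases "a = 0")
    case True
    have "b = 0"
    proof (rule ccontr)
      assume "b \<noteq> 0"
      then show False using nonneg[of "- (c + 1) / (2 * b)"] True by (simp add: field_simps)
    qed
    then show ?thesis using True by simp
  next
    case False
    then have "0 < a" using psdD(2)[OF psd B x] unfolding a_def by simp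
    then show ?thesis using nonneg[of "- b / a"] by (simp add: field_simps power2_eq_square)
  qed
  then show ?thesis unfolding a_def b_def c_def .
qed

lemma cauchy_schwarz_vec:
  assumes "(x :: real vec) \<in> carrier_vec d" "y \<in> carrier_vec d"
  shows "(y \<bullet> x)\<^sup>2 \<le> (y \<bullet> y) * (x \<bullet> x)"
  using psd_cauchy_schwarz[OF pd_imp_psd[OF pd_one one_carrier_mat] one_carrier_mat assms] assms by simp

lemma pd_cauchy_schwarz_minv:
  assumes pd: "pd K" and K: "K \<in> carrier_mat k k"
    and a: "a \<in> carrier_vec k" and x: "x \<in> carrier_vec k"
  shows "(a \<bullet> x)\<^sup>2 \<le> (a \<bullet> (minv K *\<^sub>v a)) * (x \<bullet> (K *\<^sub>v x))"
proof -
  note inv = minv_inverse[OF K pd_injective[OF pd K]]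
  define y where "y = minv K *\<^sub>v a"
  have y: "y \<in> carrier_vec k" unfolding y_def using inv(1) a by simp
  have Ky: "K *\<^sub>v y = a" unfolding y_def by (rule minv_mult_vec_cancel[OF K inv(2,1) a])
  have "a \<bullet> x = y \<bullet> (K *\<^sub>v x)"
    using bilinear_form_symmetric[OF K pdD(1)[OF pd K] y x] Ky comm_scalar_prod[OF a x] by simp
  moreover have "a \<bullet> (minv K *\<^sub>v a) = y \<bullet> (K *\<^sub>v y)"
    unfolding Ky unfolding y_def by (rule comm_scalar_prod[OF a mult_mat_vec_carrier[OF inv(1) a]])
  ultimately show ?thesis
    using psd_cauchy_schwarz[OF pd_imp_psd[OF pd K] K x y] by simp
qed

text \<open>With \<open>a = Y\<^sup>-\<^sup>1 v\<close> and \<open>b = X\<^sup>-\<^sup>1 v\<close>, Cauchy--Schwarz for the form of \<open>X\<close> gives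
  \<open>(a\<^sup>T v)\<^sup>2 = (a\<^sup>T X b)\<^sup>2 \<le> (a\<^sup>T X a) (b\<^sup>T v) \<le> (a\<^sup>T Y a) (b\<^sup>T v) = (a\<^sup>T v) (b\<^sup>T v)\<close>.\<close>

lemma loewner_le_minv:
  assumes pd: "pd X" and le: "X \<preceq>\<^sub>L Y" and X: "X \<in> carrier_mat d d"
  shows "minv Y \<preceq>\<^sub>L minv X"
proof -
  have Y: "Y \<in> carrier_mat d d" using le X unfolding loewner_le_def by auto
  have pdY: "pd Y" by (rule pd_loewner_mono[OF pd le X])
  note invX = minv_inverse[OF X pd_injective[OF pd X]]
  note invY = minv_inverse[OF Y pd_injective[OF pdY Y]]
  note psdX = psdD(2)[OF pd_imp_psd[OF pd X] X] and psdY = psdD(2)[OF pd_imp_psd[OF pdY Y] Y]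
  show ?thesis
  proof (rule loewner_leI[OF invY(1) invX(1)])
    show "transpose_mat (minv Y) = minv Y" by (rule pdD(1)[OF pd_minv[OF pdY Y] invY(1)])
    show "transpose_mat (minv X) = minv X" by (rule pdD(1)[OF pd_minv[OF pd X] invX(1)])
    fix v :: "real vec" assume v: "v \<in> carrier_vec d"
    define a where "a = minv Y *\<^sub>v v"
    define b where "b = minv X *\<^sub>v v"
    have a: "a \<in> carrier_vec d" unfolding a_def using invY(1) v by simp
    have b: "b \<in> carrier_vec d" unfolding b_def using invX(1) v by simp
    have Ya: "Y *\<^sub>v a = v" unfolding a_def by (rule minv_mult_vec_cancel[OF Y invY(2,1) v])
    have Xb: "X *\<^sub>v b = v" unfolding b_def by (rule minv_mult_vec_cancel[OF X invX(2,1) v])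
    have "(a \<bullet> v)\<^sup>2 \<le> (a \<bullet> (X *\<^sub>v a)) * (b \<bullet> v)"
      using psd_cauchy_schwarz[OF pd_imp_psd[OF pd X] X b a] unfolding Xb .
    also have "\<dots> \<le> (a \<bullet> v) * (b \<bullet> v)"
      using loewner_leD[OF le X a] psdX[OF b] unfolding Ya Xb by (rule mult_right_mono)
    finally have sq: "(a \<bullet> v)\<^sup>2 \<le> (a \<bullet> v) * (b \<bullet> v)" .
    have "0 \<le> a \<bullet> v" using psdY[OF a] unfolding Ya .
    then have "a \<bullet> v \<le> b \<bullet> v"
      using sq psdX[OF b] unfolding Xb by (cases "a \<bullet> v = 0") (auto simp: power2_eq_square)
    then show "v \<bullet> (minv Y *\<^sub>v v) \<le> v \<bullet> (minv X *\<^sub>v v)"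
      unfolding a_def b_def using comm_scalar_prod[OF v] invX(1) invY(1) v by simp
  qed
qed

section \<open>The Rayleigh quotient and the largest eigenvalue\<close>

lemma smult_mat_mult_vec:
  assumes "(A :: real mat) \<in> carrier_mat r c" "v \<in> carrier_vec c"
  shows "(a \<cdot>\<^sub>m A) *\<^sub>v v = a \<cdot>\<^sub>v (A *\<^sub>v v)"
  using assms by (intro eq_vecI) (auto simp: scalar_prod_def sum_distrib_left algebra_simps)

definition frobenius_sq :: "real mat \<Rightarrow> real" where
  "frobenius_sq A = (\<Sum>i<dim_row A. row A i \<bullet> row A i)"

lemma frobenius_sq_nonneg: "0 \<le> frobenius_sq A"
  unfolding frobenius_sq_def by (auto intro: sum_nonneg scalar_prod_self_nonneg)

lemma mult_mat_vec_sq_le_frobenius: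
  assumes A: "(A :: real mat) \<in> carrier_mat r c" and v: "v \<in> carrier_vec c"
  shows "(A *\<^sub>v v) \<bullet> (A *\<^sub>v v) \<le> frobenius_sq A * (v \<bullet> v)"
proof -
  have "(A *\<^sub>v v) \<bullet> (A *\<^sub>v v) = (\<Sum>i<r. (row A i \<bullet> v)\<^sup>2)"
    using A v unfolding scalar_prod_def[of "A *\<^sub>v v"] by (auto simp: power2_eq_square lessThan_atLeast0)
  also have "\<dots> \<le> (\<Sum>i<r. (row A i \<bullet> row A i) * (v \<bullet> v))"
    using A v by (intro sum_mono) (auto intro: cauchy_schwarz_vec[of _ c])
  also have "\<dots> = frobenius_sq A * (v \<bullet> v)"
    unfolding frobenius_sq_def using A by (simp add: sum_distrib_right)
  finally show ?thesis .
qed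

lemma quadratic_form_le_frobenius:
  assumes M: "(M :: real mat) \<in> carrier_mat d d" and v: "v \<in> carrier_vec d"
  shows "v \<bullet> (M *\<^sub>v v) \<le> sqrt (frobenius_sq M) * (v \<bullet> v)"
proof (rule power2_le_imp_le)
  have "(v \<bullet> (M *\<^sub>v v))\<^sup>2 \<le> (v \<bullet> v) * ((M *\<^sub>v v) \<bullet> (M *\<^sub>v v))"
    using cauchy_schwarz_vec[of "M *\<^sub>v v" d v] M v by simp
  also have "\<dots> \<le> (v \<bullet> v) * (frobenius_sq M * (v \<bullet> v))"
    using mult_mat_vec_sq_le_frobenius[OF M v] scalar_prod_self_nonneg by (rule mult_left_mono)
  also have "\<dots> = (sqrt (frobenius_sq M) * (v \<bullet> v))\<^sup>2"
    using frobenius_sq_nonneg[of M] by (simp add: power2_eq_square power_mult_distrib)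
  finally show "(v \<bullet> (M *\<^sub>v v))\<^sup>2 \<le> (sqrt (frobenius_sq M) * (v \<bullet> v))\<^sup>2" .
  show "0 \<le> sqrt (frobenius_sq M) * (v \<bullet> v)"
    using frobenius_sq_nonneg scalar_prod_self_nonneg by simp
qed

text \<open>Coercivity comes from bounding \<open>|w|\<close> by \<open>|Q w|\<close> through the inverse, and
  \<open>|Q w|\<^sup>2\<close> by \<open>w\<^sup>T Q w\<close> through Cauchy--Schwarz for the form of \<open>Q\<close>.\<close>

lemma psd_injective_coercive:
  assumes psd: "psd Q" and Q: "Q \<in> carrier_mat d d"
    and inj: "\<And>v. v \<in> carrier_vec d \<Longrightarrow> Q *\<^sub>v v = 0\<^sub>v d \<Longrightarrow> v = 0\<^sub>v d"
  obtains \<epsilon> where "0 < \<epsilon>" "\<And>w. w \<in> carrier_vec d \<Longrightarrow> \<epsilon> * (w \<bullet> w) \<le> w \<bullet> (Q *\<^sub>v w)"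
proof -
  note inv = minv_inverse[OF Q inj]
  define F where "F = frobenius_sq (minv Q)"
  define G where "G = sqrt (frobenius_sq Q)"
  have FG: "0 \<le> F" "0 \<le> G" unfolding F_def G_def by (simp_all add: frobenius_sq_nonneg)
  have key: "w \<bullet> w \<le> F * G * (w \<bullet> (Q *\<^sub>v w))" if w: "w \<in> carrier_vec d" for w
  proof -
    define y where "y = Q *\<^sub>v w"
    have y: "y \<in> carrier_vec d" unfolding y_def using Q w by simp
    have "w = minv Q *\<^sub>v y"
      unfolding y_def using inv Q w by (simp flip: assoc_mult_mat_vec[of _ d d _ d])
    then have wy: "w \<bullet> w \<le> F * (y \<bullet> y)"
      unfolding F_def using mult_mat_vec_sq_le_frobenius[OF inv(1) y] by simp
    have wQw: "0 \<le> w \<bullet> (Q *\<^sub>v w)" using psdD(2)[OF psd Q w] .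
    have "(y \<bullet> y)\<^sup>2 \<le> (y \<bullet> (Q *\<^sub>v y)) * (w \<bullet> (Q *\<^sub>v w))"
      using psd_cauchy_schwarz[OF psd Q w y] unfolding y_def .
    also have "\<dots> \<le> (G * (y \<bullet> y)) * (w \<bullet> (Q *\<^sub>v w))"
      using quadratic_form_le_frobenius[OF Q y] wQw unfolding G_def by (rule mult_right_mono)
    finally have "y \<bullet> y \<le> G * (w \<bullet> (Q *\<^sub>v w))"
      using scalar_prod_self_nonneg[of y] FG wQw
      by (cases "y \<bullet> y = 0") (auto simp: power2_eq_square mult.assoc)
    then show ?thesis using wy FG(1) by (smt (verit) mult.assoc mult_left_mono)
  qed
  show ?thesis
  proof
    show "0 < 1 / (F * G + 1)" using FG by (simp add: add_nonneg_pos)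
    fix w :: "real vec" assume w: "w \<in> carrier_vec d"
    have "1 / (F * G + 1) * (w \<bullet> w) \<le> 1 / (F * G + 1) * (F * G * (w \<bullet> (Q *\<^sub>v w)))"
      using key[OF w] FG by (simp add: divide_right_mono)
    also have "\<dots> \<le> w \<bullet> (Q *\<^sub>v w)"
      using FG psdD(2)[OF psd Q w] by (simp add: divide_le_eq add_nonneg_pos ring_distribs)
    finally show "1 / (F * G + 1) * (w \<bullet> w) \<le> w \<bullet> (Q *\<^sub>v w)" .
  qed
qed

lemma finite_eigenvalues:
  assumes "(M :: real mat) \<in> carrier_mat d d"
  shows "finite {k. eigenvalue M k}"
proof -
  have "char_poly M \<noteq> 0" using degree_monic_char_poly[OF assms] by auto
  then have "finite {k. poly (char_poly M) k = 0}" by (rule poly_roots_finite)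
  then show ?thesis using eigenvalue_root_char_poly[OF assms] by simp
qed

lemma eigenvalue_if_not_coercive:
  assumes M: "(M :: real mat) \<in> carrier_mat d d" and sym: "transpose_mat M = M"
    and le: "\<And>w. w \<in> carrier_vec d \<Longrightarrow> w \<bullet> (M *\<^sub>v w) \<le> \<mu> * (w \<bullet> w)"
    and not_coercive: "\<And>\<epsilon>. 0 < \<epsilon> \<Longrightarrow> \<exists>w \<in> carrier_vec d. (\<mu> - \<epsilon>) * (w \<bullet> w) < w \<bullet> (M *\<^sub>v w)"
  shows "eigenvalue M \<mu>"
proof (rule ccontr)
  assume no_ev: "\<not> eigenvalue M \<mu>"
  define Q where "Q = \<mu> \<cdot>\<^sub>m 1\<^sub>m d - M"
  have Q: "Q \<in> carrier_mat d d" unfolding Q_def by (rule minus_carrier_mat[OF M])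
  have Qv: "Q *\<^sub>v v = \<mu> \<cdot>\<^sub>v v - M *\<^sub>v v" if "v \<in> carrier_vec d" for v
    unfolding Q_def using M that by (simp add: minus_mult_distrib_mat_vec[of _ d d] smult_mat_mult_vec[of _ d d])
  have form: "v \<bullet> (Q *\<^sub>v v) = \<mu> * (v \<bullet> v) - v \<bullet> (M *\<^sub>v v)" if "v \<in> carrier_vec d" for v
    using Qv[OF that] M that by (simp add: scalar_prod_minus_distrib[of _ d])
  have "psd Q"
  proof (rule psdI[OF Q])
    have "\<mu> \<cdot>\<^sub>m 1\<^sub>m d \<in> carrier_mat d d" "transpose_mat (\<mu> \<cdot>\<^sub>m 1\<^sub>m d) = \<mu> \<cdot>\<^sub>m 1\<^sub>m d"
      by (auto intro!: eq_matI)
    then show "transpose_mat Q = Q" unfolding Q_def using transpose_minus M sym by metis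
    show "0 \<le> v \<bullet> (Q *\<^sub>v v)" if "v \<in> carrier_vec d" for v using form[OF that] le[OF that] by simp
  qed
  moreover have "v = 0\<^sub>v d" if v: "v \<in> carrier_vec d" "Q *\<^sub>v v = 0\<^sub>v d" for v
  proof (rule ccontr)
    assume "v \<noteq> 0\<^sub>v d"
    moreover have "M *\<^sub>v v = \<mu> \<cdot>\<^sub>v v"
    proof (rule eq_vecI)
      fix i assume "i < dim_vec (\<mu> \<cdot>\<^sub>v v)"
      then have "i < d" using v by simp
      then show "(M *\<^sub>v v) $ i = (\<mu> \<cdot>\<^sub>v v) $ i"
        using arg_cong[OF Qv[OF v(1), unfolded v(2)], of "\<lambda>u. u $ i"] v M by simp
    qed (use v M in simp)
    ultimately show False using no_ev v M unfolding eigenvalue_def eigenvector_def by auto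
  qed
  ultimately obtain \<epsilon> where "0 < \<epsilon>" and "\<And>w. w \<in> carrier_vec d \<Longrightarrow> \<epsilon> * (w \<bullet> w) \<le> w \<bullet> (Q *\<^sub>v w)"
    using psd_injective_coercive[OF _ Q] by blast
  then show False using not_coercive[of \<epsilon>] form by (force simp: algebra_simps)
qed

lemma rayleigh_quotient_supremum:
  assumes M: "(M :: real mat) \<in> carrier_mat d d" and "0 < d"
  obtains \<mu> where "\<And>w. w \<in> carrier_vec d \<Longrightarrow> w \<bullet> (M *\<^sub>v w) \<le> \<mu> * (w \<bullet> w)"
    and "\<And>\<epsilon>. 0 < \<epsilon> \<Longrightarrow> \<exists>w \<in> carrier_vec d. (\<mu> - \<epsilon>) * (w \<bullet> w) < w \<bullet> (M *\<^sub>v w)"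
proof
  define R where "R = (\<lambda>w. w \<bullet> (M *\<^sub>v w) / (w \<bullet> w)) ` (carrier_vec d - {0\<^sub>v d})"
  have "unit_vec d 0 \<in> carrier_vec d - {0\<^sub>v d}"
    using \<open>0 < d\<close> by (auto simp: unit_vec_def zero_vec_def vec_eq_iff)
  then have R_ne: "R \<noteq> {}" unfolding R_def by blast
  have "r \<le> sqrt (frobenius_sq M)" if "r \<in> R" for r
  proof -
    obtain w where w: "w \<in> carrier_vec d" "w \<noteq> 0\<^sub>v d" and r: "r = w \<bullet> (M *\<^sub>v w) / (w \<bullet> w)"
      using \<open>r \<in> R\<close> unfolding R_def by blast
    show ?thesis
      unfolding r using quadratic_form_le_frobenius[OF M w(1)] scalar_prod_self_pos[OF w]
      by (simp add: divide_le_eq)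
  qed
  then have R_bdd: "bdd_above R" by (rule bdd_aboveI)
  show "w \<bullet> (M *\<^sub>v w) \<le> Sup R * (w \<bullet> w)" if w: "w \<in> carrier_vec d" for w
  proof (cases "w = 0\<^sub>v d")
    case True
    then show ?thesis using M by simp
  next
    case False
    then have "w \<bullet> (M *\<^sub>v w) / (w \<bullet> w) \<le> Sup R"
      using w by (intro cSup_upper[OF _ R_bdd]) (auto simp: R_def)
    then show ?thesis using scalar_prod_self_pos[OF w False] by (simp add: divide_le_eq)
  qed
  fix \<epsilon> :: real assume "0 < \<epsilon>"
  then obtain r where "r \<in> R" "Sup R - \<epsilon> < r" using less_cSupE[OF _ R_ne, of "Sup R - \<epsilon>"] by auto
  then obtain w where w: "w \<in> carrier_vec d" "w \<noteq> 0\<^sub>v d" and "Sup R - \<epsilon> < w \<bullet> (M *\<^sub>v w) / (w \<bullet> w)"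
    unfolding R_def by blast
  then have "(Sup R - \<epsilon>) * (w \<bullet> w) < w \<bullet> (M *\<^sub>v w)"
    using scalar_prod_self_pos[OF w] by (simp add: less_divide_eq)
  then show "\<exists>w \<in> carrier_vec d. (Sup R - \<epsilon>) * (w \<bullet> w) < w \<bullet> (M *\<^sub>v w)" using w by blast
qed

lemma quadratic_form_le_lambda_max:
  assumes M: "(M :: real mat) \<in> carrier_mat d d" and sym: "transpose_mat M = M" and "0 < d"
    and v: "v \<in> carrier_vec d"
  shows "v \<bullet> (M *\<^sub>v v) \<le> lambda_max M * (v \<bullet> v)"
proof -
  obtain \<mu> where le: "\<And>w. w \<in> carrier_vec d \<Longrightarrow> w \<bullet> (M *\<^sub>v w) \<le> \<mu> * (w \<bullet> w)"
    and approx: "\<And>\<epsilon>. 0 < \<epsilon> \<Longrightarrow> \<exists>w \<in> carrier_vec d. (\<mu> - \<epsilon>) * (w \<bullet> w) < w \<bullet> (M *\<^sub>v w)"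
    using rayleigh_quotient_supremum[OF M \<open>0 < d\<close>] by blast
  have "eigenvalue M \<mu>" by (rule eigenvalue_if_not_coercive[OF M sym le approx])
  then have "\<mu> \<le> lambda_max M"
    unfolding lambda_max_def using finite_eigenvalues[OF M] by (intro Max_ge) auto
  then have "\<mu> * (v \<bullet> v) \<le> lambda_max M * (v \<bullet> v)"
    using scalar_prod_self_nonneg by (rule mult_right_mono)
  then show ?thesis using le[OF v] by linarith
qed

section \<open>Block-diagonal matrices\<close>

lemma quadratic_form_mult_transpose:
  assumes "(A :: real mat) \<in> carrier_mat r c" "v \<in> carrier_vec r"
  shows "v \<bullet> ((A * transpose_mat A) *\<^sub>v v) = (transpose_mat A *\<^sub>v v) \<bullet> (transpose_mat A *\<^sub>v v)"
  using assms transpose_vec_mult_scalar[of A r c "transpose_mat A *\<^sub>v v" v]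
  by (simp add: assoc_mult_mat_vec[of _ r c _ r])

lemma pd_mult_transposeI:
  assumes A: "(A :: real mat) \<in> carrier_mat r c"
    and inj: "\<And>v. v \<in> carrier_vec r \<Longrightarrow> transpose_mat A *\<^sub>v v = 0\<^sub>v c \<Longrightarrow> v = 0\<^sub>v r"
  shows "pd (A * transpose_mat A)"
proof (rule pdI)
  show "A * transpose_mat A \<in> carrier_mat r r" "transpose_mat (A * transpose_mat A) = A * transpose_mat A"
    using A by (auto simp: transpose_mult[of _ r c _ r])
  fix v :: "real vec" assume v: "v \<in> carrier_vec r" "v \<noteq> 0\<^sub>v r"
  then have "transpose_mat A *\<^sub>v v \<noteq> 0\<^sub>v c" using inj by blast
  then show "0 < v \<bullet> ((A * transpose_mat A) *\<^sub>v v)"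
    unfolding quadratic_form_mult_transpose[OF A v(1)] using A v(1) by (intro scalar_prod_self_pos) auto
qed

lemma pd_mult_transpose_injective:
  assumes "pd (A * transpose_mat A)" "(A :: real mat) \<in> carrier_mat r c"
    and "v \<in> carrier_vec r" "transpose_mat A *\<^sub>v v = 0\<^sub>v c"
  shows "v = 0\<^sub>v r"
  using pdD(2)[OF assms(1) _ assms(3)] assms quadratic_form_mult_transpose[OF assms(2,3)] by fastforce

lemma DN_carrier: "DN X p N \<in> carrier_mat (N * p) (N * p)"
  unfolding DN_def block_mat_def by simp

lemma index_DN:
  assumes "i < N * p" "j < N * p"
  shows "DN X p N $$ (i, j) = (if i div p = j div p then X $$ (i mod p, j mod p) else 0)"
proof -
  have "0 < p" using assms by (cases p) auto
  then show ?thesis using assms unfolding DN_def block_mat_def by simp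
qed

lemma transpose_DN:
  assumes "X \<in> carrier_mat p p"
  shows "transpose_mat (DN X p N) = DN (transpose_mat X) p N"
proof (rule eq_matI)
  have dims: "dim_row (DN Y p N) = N * p" "dim_col (DN Y p N) = N * p" for Y
    using DN_carrier by auto
  fix i j assume "i < dim_row (DN (transpose_mat X) p N)" "j < dim_col (DN (transpose_mat X) p N)"
  then have ij: "i < N * p" "j < N * p" unfolding dims .
  then have "0 < p" by (cases p) auto
  then show "transpose_mat (DN X p N) $$ (i, j) = DN (transpose_mat X) p N $$ (i, j)"
    using ij assms by (simp add: dims index_DN)
qed (simp_all add: DN_carrier[THEN carrier_matD(1)] DN_carrier[THEN carrier_matD(2)])

lemma block_index_less:
  assumes "i < N" "r < (p :: nat)"
  shows "i * p + r < N * p"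
proof -
  have "i * p + r < Suc i * p" using assms(2) by simp
  also have "\<dots> \<le> N * p" using assms(1) by (intro mult_le_mono1) simp
  finally show ?thesis .
qed

lemma DN_mult_vec_block:
  assumes X: "X \<in> carrier_mat p p" and x: "x \<in> carrier_vec (N * p)" and "i < N" "r < p"
  shows "(DN X p N *\<^sub>v x) $ (i * p + r) = (X *\<^sub>v vec p (\<lambda>s. x $ (i * p + s))) $ r"
proof -
  have ir: "i * p + r < N * p" using block_index_less[OF assms(3,4)] .
  have block: "{k \<in> {0..<N * p}. k div p = i} = (\<lambda>s. i * p + s) ` {0..<p}"
  proof (intro subset_antisym subsetI)
    fix k assume k: "k \<in> {k \<in> {0..<N * p}. k div p = i}"
    have "k = i * p + k mod p" using k div_mult_mod_eq[of k p] by simp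
    moreover have "k mod p \<in> {0..<p}" using assms(4) by simp
    ultimately show "k \<in> (\<lambda>s. i * p + s) ` {0..<p}" by (rule image_eqI)
  next
    fix k assume "k \<in> (\<lambda>s. i * p + s) ` {0..<p}"
    then obtain s where "s \<in> {0..<p}" "k = i * p + s" by blast
    then show "k \<in> {k \<in> {0..<N * p}. k div p = i}"
      using block_index_less[OF assms(3)] by simp
  qed
  have "(DN X p N *\<^sub>v x) $ (i * p + r)
      = (\<Sum>k\<in>{0..<N * p}. if k div p = i then X $$ (r, k mod p) * x $ k else 0)"
  proof -
    have dims: "dim_row (DN X p N) = N * p" "dim_col (DN X p N) = N * p" using DN_carrier by auto
    have "(DN X p N *\<^sub>v x) $ (i * p + r) = (\<Sum>k\<in>{0..<N * p}. DN X p N $$ (i * p + r, k) * x $ k)"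
      using ir x by (simp add: dims scalar_prod_def)
    also have "\<dots> = (\<Sum>k\<in>{0..<N * p}. if k div p = i then X $$ (r, k mod p) * x $ k else 0)"
      using ir assms(4) by (intro sum.cong) (auto simp: index_DN)
    finally show ?thesis .
  qed
  also have "\<dots> = (\<Sum>k\<in>{k \<in> {0..<N * p}. k div p = i}. X $$ (r, k mod p) * x $ k)"
    by (rule sum.inter_filter[symmetric]) simp
  also have "\<dots> = (\<Sum>k\<in>(\<lambda>s. i * p + s) ` {0..<p}. X $$ (r, k mod p) * x $ k)"
    by (simp only: block)
  also have "\<dots> = (\<Sum>s\<in>{0..<p}. X $$ (r, s) * x $ (i * p + s))"
    by (subst sum.reindex) (auto simp: inj_on_def)
  also have "\<dots> = (X *\<^sub>v vec p (\<lambda>s. x $ (i * p + s))) $ r"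
    using X assms(4) by (simp add: scalar_prod_def)
  finally show ?thesis .
qed

lemma DN_injective:
  assumes X: "X \<in> carrier_mat p p"
    and inj: "\<And>y. y \<in> carrier_vec p \<Longrightarrow> X *\<^sub>v y = 0\<^sub>v p \<Longrightarrow> y = 0\<^sub>v p"
    and x: "x \<in> carrier_vec (N * p)" and zero: "DN X p N *\<^sub>v x = 0\<^sub>v (N * p)"
  shows "x = 0\<^sub>v (N * p)"
proof (rule eq_vecI)
  fix k assume "k < dim_vec (0\<^sub>v (N * p))"
  then have k: "k < N * p" by simp
  then have p: "0 < p" by (cases p) auto
  define i where "i = k div p"
  have i: "i < N" unfolding i_def using k by (rule less_mult_imp_div_less)
  have "X *\<^sub>v vec p (\<lambda>s. x $ (i * p + s)) = 0\<^sub>v p"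
  proof (rule eq_vecI)
    fix r assume "r < dim_vec (0\<^sub>v p)"
    then have r: "r < p" by simp
    have "(DN X p N *\<^sub>v x) $ (i * p + r) = 0"
      unfolding zero using block_index_less[OF i r] by simp
    then show "(X *\<^sub>v vec p (\<lambda>s. x $ (i * p + s))) $ r = 0\<^sub>v p $ r"
      unfolding DN_mult_vec_block[OF X x i r] using r by simp
  qed (use X in simp)
  then have "vec p (\<lambda>s. x $ (i * p + s)) = 0\<^sub>v p" using inj by simp
  then have "vec p (\<lambda>s. x $ (i * p + s)) $ (k mod p) = 0" using p by simp
  moreover have "i * p + k mod p = k" unfolding i_def by (rule div_mult_mod_eq)
  ultimately show "x $ k = 0\<^sub>v (N * p) $ k" using p k by simp
qed (use x in simp)

lemma pd_DN_mult_transpose: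
  assumes X: "X \<in> carrier_mat p p" and pd: "pd (X * transpose_mat X)"
  shows "pd (DN X p N * transpose_mat (DN X p N))"
proof (rule pd_mult_transposeI[OF DN_carrier])
  fix x :: "real vec"
  assume x: "x \<in> carrier_vec (N * p)" and zero: "transpose_mat (DN X p N) *\<^sub>v x = 0\<^sub>v (N * p)"
  show "x = 0\<^sub>v (N * p)"
  proof (rule DN_injective[of "transpose_mat X"])
    show "transpose_mat X \<in> carrier_mat p p" using X by simp
    show "y = 0\<^sub>v p" if "y \<in> carrier_vec p" "transpose_mat X *\<^sub>v y = 0\<^sub>v p" for y
      by (rule pd_mult_transpose_injective[OF pd X that])
    show "DN (transpose_mat X) p N *\<^sub>v x = 0\<^sub>v (N * p)" using zero unfolding transpose_DN[OF X] .
  qed (rule x)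
qed

section \<open>The gap \<open>K - L\<^sup>T \<Phi> L\<close>\<close>

lemma L_minv_K_Lt_mult_vec:
  assumes pd: "pd K" and K: "K \<in> carrier_mat k k" and L: "L \<in> carrier_mat d k"
    and v: "v \<in> carrier_vec d"
  defines "w \<equiv> minv K *\<^sub>v (transpose_mat L *\<^sub>v v)"
  shows "(L * minv K * transpose_mat L) *\<^sub>v v = L *\<^sub>v w"
    and "v \<bullet> ((L * minv K * transpose_mat L) *\<^sub>v v) = w \<bullet> (K *\<^sub>v w)"
proof -
  note inv = minv_inverse[OF K pd_injective[OF pd K]]
  have Ltv: "transpose_mat L *\<^sub>v v \<in> carrier_vec k" using L v by simp
  have w: "w \<in> carrier_vec k" unfolding w_def using inv(1) Ltv by simp
  show Mv: "(L * minv K * transpose_mat L) *\<^sub>v v = L *\<^sub>v w"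
    unfolding w_def using L inv(1) v by (simp add: assoc_mult_mat_vec[of _ d k _ d])
  have "K *\<^sub>v w = transpose_mat L *\<^sub>v v"
    unfolding w_def by (rule minv_mult_vec_cancel[OF K inv(2,1) Ltv])
  then show "v \<bullet> ((L * minv K * transpose_mat L) *\<^sub>v v) = w \<bullet> (K *\<^sub>v w)"
    unfolding Mv using transpose_vec_mult_scalar[OF L w v] comm_scalar_prod[OF w Ltv] by simp
qed

lemma sq_norm_sq_le_L_minv_K_Lt_form:
  assumes pd: "pd K" and K: "K \<in> carrier_mat k k" and L: "L \<in> carrier_mat d k"
    and u: "u \<in> carrier_vec k"
  shows "((L *\<^sub>v u) \<bullet> (L *\<^sub>v u))\<^sup>2
    \<le> ((L *\<^sub>v u) \<bullet> ((L * minv K * transpose_mat L) *\<^sub>v (L *\<^sub>v u))) * (u \<bullet> (K *\<^sub>v u))"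
proof -
  define a where "a = transpose_mat L *\<^sub>v (L *\<^sub>v u)"
  have a: "a \<in> carrier_vec k" unfolding a_def using L u by simp
  have "(L *\<^sub>v u) \<bullet> (L *\<^sub>v u) = a \<bullet> u"
    unfolding a_def using transpose_vec_mult_scalar[OF L u, of "L *\<^sub>v u"] L u by simp
  moreover have "(L *\<^sub>v u) \<bullet> ((L * minv K * transpose_mat L) *\<^sub>v (L *\<^sub>v u)) = a \<bullet> (minv K *\<^sub>v a)"
    using bilinear_form_congruence[of "transpose_mat L" k d "minv K" "L *\<^sub>v u" "L *\<^sub>v u"]
      minv_inverse(1)[OF K pd_injective[OF pd K]] L u unfolding a_def by simp
  ultimately show ?thesis using pd_cauchy_schwarz_minv[OF pd K a u] by simp
qed

lemma sq_norm_le_lambda_max_form: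
  assumes pd: "pd K" and K: "K \<in> carrier_mat k k" and L: "L \<in> carrier_mat d k" and "0 < d"
    and u: "u \<in> carrier_vec k" and Lu: "L *\<^sub>v u \<noteq> 0\<^sub>v d"
  shows "(L *\<^sub>v u) \<bullet> (L *\<^sub>v u) \<le> lambda_max (L * minv K * transpose_mat L) * (u \<bullet> (K *\<^sub>v u))"
proof -
  define M where "M = L * minv K * transpose_mat L"
  define w where "w = L *\<^sub>v u"
  have w: "w \<in> carrier_vec d" unfolding w_def using L u by simp
  have ww: "0 < w \<bullet> w" using scalar_prod_self_pos[OF w Lu[folded w_def]] .
  have Ki: "minv K \<in> carrier_mat k k" by (rule minv_inverse(1)[OF K pd_injective[OF pd K]])
  have psdM: "psd M"
    using psd_congruence[OF pd_imp_psd[OF pd_minv[OF pd K] Ki] Ki, of "transpose_mat L" d] L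
    unfolding M_def by simp
  have M: "M \<in> carrier_mat d d" unfolding M_def using Ki L by simp
  have uKu: "0 \<le> u \<bullet> (K *\<^sub>v u)" using psdD(2)[OF pd_imp_psd[OF pd K] K u] .
  have "(w \<bullet> w)\<^sup>2 \<le> (w \<bullet> (M *\<^sub>v w)) * (u \<bullet> (K *\<^sub>v u))"
    using sq_norm_sq_le_L_minv_K_Lt_form[OF pd K L u] unfolding M_def w_def .
  also have "\<dots> \<le> (lambda_max M * (w \<bullet> w)) * (u \<bullet> (K *\<^sub>v u))"
    using quadratic_form_le_lambda_max[OF M psdD(1)[OF psdM M] \<open>0 < d\<close> w] uKu by (rule mult_right_mono)
  finally show ?thesis
    using ww unfolding M_def[symmetric] w_def[symmetric] by (simp add: power2_eq_square mult_ac)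
qed

lemma below_phi_tilde_quadratic_form:
  assumes below: "below_phi_tilde M d \<Phi>" and M0: "M \<noteq> 0\<^sub>m d d"
    and psd: "psd \<Phi>" and \<Phi>: "\<Phi> \<in> carrier_mat d d" and "0 < d"
    and w: "w \<in> carrier_vec d" "w \<noteq> 0\<^sub>v d"
  shows "0 < lambda_max M" "lambda_max M * (w \<bullet> (\<Phi> *\<^sub>v w)) < w \<bullet> w"
proof -
  define c where "c = 1 / lambda_max M"
  have "\<Phi> \<prec>\<^sub>L c \<cdot>\<^sub>m 1\<^sub>m d" using below M0 unfolding below_phi_tilde_def c_def by simp
  then have pd: "pd (c \<cdot>\<^sub>m 1\<^sub>m d - \<Phi>)" unfolding loewner_lt_def by simp
  have lt: "v \<bullet> (\<Phi> *\<^sub>v v) < c * (v \<bullet> v)" if "v \<in> carrier_vec d" "v \<noteq> 0\<^sub>v d" for v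
    using pdD(2)[OF pd minus_carrier_mat[OF \<Phi>] that] that \<Phi>
    by (simp add: minus_mult_distrib_mat_vec[of _ d d] smult_mat_mult_vec[of _ d d]
        scalar_prod_minus_distrib[of _ d])
  have "unit_vec d 0 \<in> carrier_vec d" "unit_vec d 0 \<noteq> 0\<^sub>v d"
    using \<open>0 < d\<close> by (auto simp: unit_vec_def zero_vec_def vec_eq_iff)
  then have "0 < c"
    using lt[of "unit_vec d 0"] psdD(2)[OF psd \<Phi>, of "unit_vec d 0"] \<open>0 < d\<close> by simp
  then show pos: "0 < lambda_max M" unfolding c_def by simp
  show "lambda_max M * (w \<bullet> (\<Phi> *\<^sub>v w)) < w \<bullet> w"
    using mult_strict_left_mono[OF lt[OF w] pos] pos unfolding c_def by simp
qed

lemma quadratic_form_minus_congruence: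
  assumes "(K :: real mat) \<in> carrier_mat k k" "L \<in> carrier_mat d k" "\<Phi> \<in> carrier_mat d d" "u \<in> carrier_vec k"
  shows "u \<bullet> ((K - transpose_mat L * \<Phi> * L) *\<^sub>v u) = u \<bullet> (K *\<^sub>v u) - (L *\<^sub>v u) \<bullet> (\<Phi> *\<^sub>v (L *\<^sub>v u))"
proof -
  have T: "transpose_mat L * \<Phi> * L \<in> carrier_mat k k" using assms by simp
  have "(K - transpose_mat L * \<Phi> * L) *\<^sub>v u = K *\<^sub>v u - (transpose_mat L * \<Phi> * L) *\<^sub>v u"
    by (rule minus_mult_distrib_mat_vec[OF assms(1) T assms(4)])
  then show ?thesis
    using scalar_prod_minus_distrib[OF assms(4), of "K *\<^sub>v u" "(transpose_mat L * \<Phi> * L) *\<^sub>v u"]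
      bilinear_form_congruence[OF assms(2,3,4,4)] assms(1,4) T by simp
qed

lemma pd_minus_congruence_if_below_phi_tilde:
  assumes pd: "pd K" and K: "K \<in> carrier_mat k k" and L: "L \<in> carrier_mat d k" and "0 < d"
    and psd: "psd \<Phi>" and \<Phi>: "\<Phi> \<in> carrier_mat d d"
    and below: "below_phi_tilde (L * minv K * transpose_mat L) d \<Phi>"
  shows "pd (K - transpose_mat L * \<Phi> * L)"
proof (rule pdI)
  define M where "M = L * minv K * transpose_mat L"
  have LtL: "transpose_mat L * \<Phi> * L \<in> carrier_mat k k" using L \<Phi> by simp
  show "K - transpose_mat L * \<Phi> * L \<in> carrier_mat k k" by (rule minus_carrier_mat[OF LtL])
  show "transpose_mat (K - transpose_mat L * \<Phi> * L) = K - transpose_mat L * \<Phi> * L"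
    using transpose_minus[OF K LtL] pdD(1)[OF pd K] psdD(1)[OF psd_congruence[OF psd \<Phi> L] LtL] by simp
  fix u :: "real vec" assume u: "u \<in> carrier_vec k" "u \<noteq> 0\<^sub>v k"
  have uKu: "0 < u \<bullet> (K *\<^sub>v u)" by (rule pdD(2)[OF pd K u])
  have "(L *\<^sub>v u) \<bullet> (\<Phi> *\<^sub>v (L *\<^sub>v u)) < u \<bullet> (K *\<^sub>v u)"
  proof (cases "L *\<^sub>v u = 0\<^sub>v d")
    case True
    then show ?thesis using \<Phi> uKu by simp
  next
    case Lu: False
    have w: "L *\<^sub>v u \<in> carrier_vec d" using L u by simp
    have "M \<noteq> 0\<^sub>m d d"
    proof
      assume "M = 0\<^sub>m d d"
      moreover have "0\<^sub>m d d *\<^sub>v (L *\<^sub>v u) = 0\<^sub>v d" using w by (intro eq_vecI) auto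
      ultimately have "((L *\<^sub>v u) \<bullet> (L *\<^sub>v u))\<^sup>2 \<le> 0"
        using sq_norm_sq_le_L_minv_K_Lt_form[OF pd K L u(1)] w unfolding M_def[symmetric] by simp
      then show False using scalar_prod_self_pos[OF w Lu] by simp
    qed
    note below_form = below_phi_tilde_quadratic_form[OF below[folded M_def] this psd \<Phi> \<open>0 < d\<close> w Lu]
    have "lambda_max M * ((L *\<^sub>v u) \<bullet> (\<Phi> *\<^sub>v (L *\<^sub>v u))) < lambda_max M * (u \<bullet> (K *\<^sub>v u))"
      using below_form(2) sq_norm_le_lambda_max_form[OF pd K L \<open>0 < d\<close> u(1) Lu]
      unfolding M_def by linarith
    then show ?thesis using below_form(1) by simp
  qed
  then show "0 < u \<bullet> ((K - transpose_mat L * \<Phi> * L) *\<^sub>v u)"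
    using quadratic_form_minus_congruence[OF K L \<Phi> u(1)] by simp
qed

lemma one_minus_L_minv_K_Lt_mult_injective:
  assumes pd: "pd K" and K: "K \<in> carrier_mat k k" and L: "L \<in> carrier_mat d k"
    and \<Phi>: "\<Phi> \<in> carrier_mat d d" and pd_gap: "pd (K - transpose_mat L * \<Phi> * L)"
    and a: "a \<in> carrier_vec d" and zero: "(1\<^sub>m d - L * minv K * transpose_mat L * \<Phi>) *\<^sub>v a = 0\<^sub>v d"
  shows "a = 0\<^sub>v d"
proof -
  define M where "M = L * minv K * transpose_mat L"
  define y where "y = \<Phi> *\<^sub>v a"
  define w where "w = minv K *\<^sub>v (transpose_mat L *\<^sub>v y)"
  have Ki: "minv K \<in> carrier_mat k k" by (rule minv_inverse(1)[OF K pd_injective[OF pd K]])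
  have M: "M \<in> carrier_mat d d" unfolding M_def using Ki L by simp
  have y: "y \<in> carrier_vec d" unfolding y_def using \<Phi> a by simp
  have w: "w \<in> carrier_vec k" unfolding w_def using Ki L y by simp
  have diff: "a - M *\<^sub>v y = 0\<^sub>v d"
    using zero M \<Phi> a unfolding M_def[symmetric] y_def
    by (simp add: minus_mult_distrib_mat_vec[of _ d d] assoc_mult_mat_vec[of _ d d _ d])
  have "a = M *\<^sub>v y"
  proof (rule eq_vecI)
    fix i assume "i < dim_vec (M *\<^sub>v y)"
    then have i: "i < d" using M by simp
    have "(a - M *\<^sub>v y) $ i = 0" using diff i by simp
    then show "a $ i = (M *\<^sub>v y) $ i" using i a M by simp
  qed (use a M in simp)
  then have aLw: "a = L *\<^sub>v w"
    unfolding M_def w_def using L_minv_K_Lt_mult_vec(1)[OF pd K L y] by simp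
  have "w \<bullet> (K *\<^sub>v w) = y \<bullet> a"
    using L_minv_K_Lt_mult_vec(2)[OF pd K L y] \<open>a = M *\<^sub>v y\<close> unfolding M_def w_def by simp
  also have "\<dots> = (L *\<^sub>v w) \<bullet> (\<Phi> *\<^sub>v (L *\<^sub>v w))"
    unfolding y_def aLw[symmetric] using comm_scalar_prod[OF _ a] \<Phi> a by simp
  finally have "w \<bullet> ((K - transpose_mat L * \<Phi> * L) *\<^sub>v w) = 0"
    using quadratic_form_minus_congruence[OF K L \<Phi> w] by simp
  then have "w = 0\<^sub>v k"
    using pdD(2)[OF pd_gap minus_carrier_mat w] L \<Phi> by (cases "w = 0\<^sub>v k") auto
  then show ?thesis using aLw mult_mat_vec_zero[OF L] by simp
qed

lemma L_minv_K_Lt_dominates_congruence: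
  assumes pd: "pd K" and K: "K \<in> carrier_mat k k" and L: "L \<in> carrier_mat d k"
    and \<Phi>: "\<Phi> \<in> carrier_mat d d" and psd_gap: "psd (K - transpose_mat L * \<Phi> * L)"
    and v: "v \<in> carrier_vec d"
  shows "((L * minv K * transpose_mat L) *\<^sub>v v) \<bullet> (\<Phi> *\<^sub>v ((L * minv K * transpose_mat L) *\<^sub>v v))
    \<le> v \<bullet> ((L * minv K * transpose_mat L) *\<^sub>v v)"
proof -
  define w where "w = minv K *\<^sub>v (transpose_mat L *\<^sub>v v)"
  have w: "w \<in> carrier_vec k"
    unfolding w_def using minv_inverse(1)[OF K pd_injective[OF pd K]] L v by simp
  have "0 \<le> w \<bullet> ((K - transpose_mat L * \<Phi> * L) *\<^sub>v w)"
    using psdD(2)[OF psd_gap minus_carrier_mat w] L \<Phi> by simp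
  then show ?thesis
    using quadratic_form_minus_congruence[OF K L \<Phi> w] L_minv_K_Lt_mult_vec[OF pd K L v]
    unfolding w_def by simp
qed

section \<open>Monotonicity of \<open>\<Phi> \<mapsto> \<Phi> (I - M \<Phi>)\<^sup>-\<^sup>1\<close>\<close>

lemma resolvent_mult_vec:
  assumes M: "(M :: real mat) \<in> carrier_mat d d" and \<Phi>: "\<Phi> \<in> carrier_mat d d"
    and P: "P \<in> carrier_mat d d" and inv: "(1\<^sub>m d - M * \<Phi>) * P = 1\<^sub>m d"
    and x: "x \<in> carrier_vec d"
  shows "x = P *\<^sub>v x - M *\<^sub>v (\<Phi> *\<^sub>v (P *\<^sub>v x))"
proof -
  have MP: "M * \<Phi> \<in> carrier_mat d d" using M \<Phi> by simp
  have "x = ((1\<^sub>m d - M * \<Phi>) * P) *\<^sub>v x" unfolding inv using x by simp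
  also have "\<dots> = (1\<^sub>m d - M * \<Phi>) *\<^sub>v (P *\<^sub>v x)"
    using assoc_mult_mat_vec[OF minus_carrier_mat[OF MP] P x] .
  also have "\<dots> = P *\<^sub>v x - M *\<^sub>v (\<Phi> *\<^sub>v (P *\<^sub>v x))"
    using minus_mult_distrib_mat_vec[OF one_carrier_mat MP, of "P *\<^sub>v x"] M \<Phi> P x by simp
  finally show ?thesis .
qed

lemma symmetric_mult_resolvent:
  assumes M: "(M :: real mat) \<in> carrier_mat d d" and sM: "transpose_mat M = M"
    and \<Phi>: "\<Phi> \<in> carrier_mat d d" and s\<Phi>: "transpose_mat \<Phi> = \<Phi>"
    and P: "P \<in> carrier_mat d d" and inv: "(1\<^sub>m d - M * \<Phi>) * P = 1\<^sub>m d"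
  shows "transpose_mat (\<Phi> * P) = \<Phi> * P"
proof (rule symmetric_if_bilinear_form_symmetric)
  show "\<Phi> * P \<in> carrier_mat d d" using \<Phi> P by simp
  have expand: "y \<bullet> (\<Phi> *\<^sub>v (P *\<^sub>v x))
      = (P *\<^sub>v y) \<bullet> (\<Phi> *\<^sub>v (P *\<^sub>v x)) - (\<Phi> *\<^sub>v (P *\<^sub>v x)) \<bullet> (M *\<^sub>v (\<Phi> *\<^sub>v (P *\<^sub>v y)))"
    if x: "x \<in> carrier_vec d" and y: "y \<in> carrier_vec d" for x y
  proof -
    have vecs: "P *\<^sub>v y \<in> carrier_vec d" "\<Phi> *\<^sub>v (P *\<^sub>v x) \<in> carrier_vec d"
      "M *\<^sub>v (\<Phi> *\<^sub>v (P *\<^sub>v y)) \<in> carrier_vec d" using M \<Phi> P x y by auto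
    have "y \<bullet> (\<Phi> *\<^sub>v (P *\<^sub>v x))
        = (P *\<^sub>v y) \<bullet> (\<Phi> *\<^sub>v (P *\<^sub>v x)) - (M *\<^sub>v (\<Phi> *\<^sub>v (P *\<^sub>v y))) \<bullet> (\<Phi> *\<^sub>v (P *\<^sub>v x))"
      by (subst resolvent_mult_vec[OF M \<Phi> P inv y]) (rule minus_scalar_prod_distrib[OF vecs(1,3,2)])
    also have "(M *\<^sub>v (\<Phi> *\<^sub>v (P *\<^sub>v y))) \<bullet> (\<Phi> *\<^sub>v (P *\<^sub>v x))
        = (\<Phi> *\<^sub>v (P *\<^sub>v x)) \<bullet> (M *\<^sub>v (\<Phi> *\<^sub>v (P *\<^sub>v y)))"
      by (rule comm_scalar_prod[OF vecs(3,2)])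
    finally show ?thesis .
  qed
  fix x y :: "real vec" assume x: "x \<in> carrier_vec d" and y: "y \<in> carrier_vec d"
  have vecs: "P *\<^sub>v x \<in> carrier_vec d" "P *\<^sub>v y \<in> carrier_vec d"
    "\<Phi> *\<^sub>v (P *\<^sub>v x) \<in> carrier_vec d" "\<Phi> *\<^sub>v (P *\<^sub>v y) \<in> carrier_vec d"
    using \<Phi> P x y by auto
  show "y \<bullet> ((\<Phi> * P) *\<^sub>v x) = x \<bullet> ((\<Phi> * P) *\<^sub>v y)"
    using expand[OF x y] expand[OF y x] bilinear_form_symmetric[OF \<Phi> s\<Phi> vecs(1,2)]
      bilinear_form_symmetric[OF M sM vecs(3,4)] \<Phi> P x y by simp
qed

lemma resolvent_difference:
  assumes M: "(M :: real mat) \<in> carrier_mat d d"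
    and \<Phi>1: "\<Phi>1 \<in> carrier_mat d d" and \<Phi>2: "\<Phi>2 \<in> carrier_mat d d"
    and a: "a \<in> carrier_vec d" and b: "b \<in> carrier_vec d"
    and xa: "x = a - M *\<^sub>v (\<Phi>2 *\<^sub>v a)" and xb: "x = b - M *\<^sub>v (\<Phi>1 *\<^sub>v b)"
  shows "b = a + M *\<^sub>v (\<Phi>1 *\<^sub>v b - \<Phi>2 *\<^sub>v a)"
proof (rule eq_vecI)
  have u: "\<Phi>1 *\<^sub>v b \<in> carrier_vec d" and v: "\<Phi>2 *\<^sub>v a \<in> carrier_vec d" using \<Phi>1 \<Phi>2 a b by auto
  fix i assume "i < dim_vec (a + M *\<^sub>v (\<Phi>1 *\<^sub>v b - \<Phi>2 *\<^sub>v a))"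
  then have i: "i < d" using M by simp
  have "(a - M *\<^sub>v (\<Phi>2 *\<^sub>v a)) $ i = (b - M *\<^sub>v (\<Phi>1 *\<^sub>v b)) $ i" using xa xb by simp
  then show "b $ i = (a + M *\<^sub>v (\<Phi>1 *\<^sub>v b - \<Phi>2 *\<^sub>v a)) $ i"
    using i a b M u v unfolding mult_minus_distrib_mat_vec[OF M u v] by simp
qed (use a b M in simp)

text \<open>With \<open>\<delta> = \<Phi>\<^sub>1 b - \<Phi>\<^sub>2 a\<close> and \<open>g = M \<delta> = b - a\<close>, the difference
  \<open>x\<^sup>T \<Phi>\<^sub>1 b - x\<^sup>T \<Phi>\<^sub>2 a\<close> equals \<open>a\<^sup>T (\<Phi>\<^sub>1 - \<Phi>\<^sub>2) a + (\<delta>\<^sup>T M \<delta> - g\<^sup>T \<Phi>\<^sub>1 g)\<close>.\<close>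

lemma resolvent_form_mono:
  assumes M: "(M :: real mat) \<in> carrier_mat d d" and sM: "transpose_mat M = M"
    and \<Phi>1: "\<Phi>1 \<in> carrier_mat d d" "transpose_mat \<Phi>1 = \<Phi>1"
    and \<Phi>2: "\<Phi>2 \<in> carrier_mat d d" "transpose_mat \<Phi>2 = \<Phi>2"
    and le: "\<Phi>2 \<preceq>\<^sub>L \<Phi>1"
    and dom: "\<And>v. v \<in> carrier_vec d \<Longrightarrow> (M *\<^sub>v v) \<bullet> (\<Phi>1 *\<^sub>v (M *\<^sub>v v)) \<le> v \<bullet> (M *\<^sub>v v)"
    and a: "a \<in> carrier_vec d" and b: "b \<in> carrier_vec d"
    and xa: "x = a - M *\<^sub>v (\<Phi>2 *\<^sub>v a)" and xb: "x = b - M *\<^sub>v (\<Phi>1 *\<^sub>v b)"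
  shows "x \<bullet> (\<Phi>2 *\<^sub>v a) \<le> x \<bullet> (\<Phi>1 *\<^sub>v b)"
proof -
  define u where "u = \<Phi>1 *\<^sub>v b"
  define v where "v = \<Phi>2 *\<^sub>v a"
  define \<delta> where "\<delta> = u - v"
  define g where "g = M *\<^sub>v \<delta>"
  have u: "u \<in> carrier_vec d" unfolding u_def using \<Phi>1 b by simp
  have v: "v \<in> carrier_vec d" unfolding v_def using \<Phi>2 a by simp
  have \<delta>: "\<delta> \<in> carrier_vec d" unfolding \<delta>_def using u v by simp
  have g: "g \<in> carrier_vec d" unfolding g_def using M \<delta> by simp
  have x: "x \<in> carrier_vec d" using xa M a v unfolding v_def[symmetric] by simp
  have Mv: "M *\<^sub>v v \<in> carrier_vec d" using M v by simp
  have bag: "b = a + g"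
    unfolding g_def \<delta>_def u_def v_def by (rule resolvent_difference[OF M \<Phi>1(1) \<Phi>2(1) a b xa xb])
  have \<Phi>1g: "\<Phi>1 *\<^sub>v g \<in> carrier_vec d" and \<Phi>1a: "\<Phi>1 *\<^sub>v a \<in> carrier_vec d"
    using \<Phi>1 a g by auto
  have u_split: "u = \<Phi>1 *\<^sub>v a + \<Phi>1 *\<^sub>v g"
    unfolding u_def bag by (rule mult_add_distrib_mat_vec[OF \<Phi>1(1) a g])
  have x\<delta>: "x \<bullet> \<delta> = x \<bullet> u - x \<bullet> v" unfolding \<delta>_def by (rule scalar_prod_minus_distrib[OF x u v])
  have x\<delta>': "x \<bullet> \<delta> = a \<bullet> \<delta> - (M *\<^sub>v v) \<bullet> \<delta>"
    unfolding xa v_def[symmetric] by (rule minus_scalar_prod_distrib[OF a Mv \<delta>])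
  have Mv\<delta>: "(M *\<^sub>v v) \<bullet> \<delta> = a \<bullet> (\<Phi>2 *\<^sub>v g)"
    using comm_scalar_prod[OF Mv \<delta>] bilinear_form_symmetric[OF M sM v \<delta>]
      comm_scalar_prod[OF v g] bilinear_form_symmetric[OF \<Phi>2 a g]
    unfolding g_def[symmetric] v_def by simp
  have "a \<bullet> \<delta> = a \<bullet> u - a \<bullet> v" unfolding \<delta>_def by (rule scalar_prod_minus_distrib[OF a u v])
  also have "a \<bullet> u = a \<bullet> (\<Phi>1 *\<^sub>v a) + a \<bullet> (\<Phi>1 *\<^sub>v g)"
    unfolding u_split by (rule scalar_prod_add_distrib[OF a \<Phi>1a \<Phi>1g])
  finally have a\<delta>: "a \<bullet> \<delta> = a \<bullet> (\<Phi>1 *\<^sub>v a) + a \<bullet> (\<Phi>1 *\<^sub>v g) - a \<bullet> (\<Phi>2 *\<^sub>v a)"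
    unfolding v_def .
  have "\<delta> \<bullet> g = u \<bullet> g - v \<bullet> g" unfolding \<delta>_def by (rule minus_scalar_prod_distrib[OF u v g])
  also have "u \<bullet> g = (\<Phi>1 *\<^sub>v a) \<bullet> g + (\<Phi>1 *\<^sub>v g) \<bullet> g"
    unfolding u_split by (rule add_scalar_prod_distrib[OF \<Phi>1a \<Phi>1g g])
  also have "(\<Phi>1 *\<^sub>v a) \<bullet> g = a \<bullet> (\<Phi>1 *\<^sub>v g)"
    using comm_scalar_prod[OF \<Phi>1a g] bilinear_form_symmetric[OF \<Phi>1 a g] by simp
  also have "(\<Phi>1 *\<^sub>v g) \<bullet> g = g \<bullet> (\<Phi>1 *\<^sub>v g)" by (rule comm_scalar_prod[OF \<Phi>1g g])
  also have "v \<bullet> g = a \<bullet> (\<Phi>2 *\<^sub>v g)"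
    using comm_scalar_prod[OF v g] bilinear_form_symmetric[OF \<Phi>2 a g] unfolding v_def by simp
  finally have \<delta>g: "\<delta> \<bullet> g = a \<bullet> (\<Phi>1 *\<^sub>v g) + g \<bullet> (\<Phi>1 *\<^sub>v g) - a \<bullet> (\<Phi>2 *\<^sub>v g)" .
  have "g \<bullet> (\<Phi>1 *\<^sub>v g) \<le> \<delta> \<bullet> g"
    using dom[OF \<delta>] comm_scalar_prod[OF \<delta> g] unfolding g_def by simp
  moreover have "a \<bullet> (\<Phi>2 *\<^sub>v a) \<le> a \<bullet> (\<Phi>1 *\<^sub>v a)" by (rule loewner_leD[OF le \<Phi>2(1) a])
  ultimately have "x \<bullet> v \<le> x \<bullet> u" using x\<delta> x\<delta>' Mv\<delta> a\<delta> \<delta>g by linarith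
  then show ?thesis unfolding u_def v_def .
qed

lemma loewner_le_mult_resolvent:
  assumes M: "(M :: real mat) \<in> carrier_mat d d" and sM: "transpose_mat M = M"
    and \<Phi>1: "\<Phi>1 \<in> carrier_mat d d" "transpose_mat \<Phi>1 = \<Phi>1"
    and \<Phi>2: "\<Phi>2 \<in> carrier_mat d d" "transpose_mat \<Phi>2 = \<Phi>2"
    and le: "\<Phi>2 \<preceq>\<^sub>L \<Phi>1"
    and dom: "\<And>v. v \<in> carrier_vec d \<Longrightarrow> (M *\<^sub>v v) \<bullet> (\<Phi>1 *\<^sub>v (M *\<^sub>v v)) \<le> v \<bullet> (M *\<^sub>v v)"
    and P1: "P1 \<in> carrier_mat d d" "(1\<^sub>m d - M * \<Phi>1) * P1 = 1\<^sub>m d"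
    and P2: "P2 \<in> carrier_mat d d" "(1\<^sub>m d - M * \<Phi>2) * P2 = 1\<^sub>m d"
  shows "\<Phi>2 * P2 \<preceq>\<^sub>L \<Phi>1 * P1"
proof (rule loewner_leI)
  show "\<Phi>2 * P2 \<in> carrier_mat d d" "\<Phi>1 * P1 \<in> carrier_mat d d" using \<Phi>1 \<Phi>2 P1 P2 by auto
  show "transpose_mat (\<Phi>2 * P2) = \<Phi>2 * P2" by (rule symmetric_mult_resolvent[OF M sM \<Phi>2 P2])
  show "transpose_mat (\<Phi>1 * P1) = \<Phi>1 * P1" by (rule symmetric_mult_resolvent[OF M sM \<Phi>1 P1])
  fix x :: "real vec" assume x: "x \<in> carrier_vec d"
  show "x \<bullet> ((\<Phi>2 * P2) *\<^sub>v x) \<le> x \<bullet> ((\<Phi>1 * P1) *\<^sub>v x)"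
    using resolvent_form_mono[OF M sM \<Phi>1 \<Phi>2 le dom _ _
        resolvent_mult_vec[OF M \<Phi>2(1) P2 x] resolvent_mult_vec[OF M \<Phi>1(1) P1 x]]
      \<Phi>1 \<Phi>2 P1 P2 x by simp
qed

lemma pd_one_plus_congruence_minv:
  assumes "pd E" "E \<in> carrier_mat q q" "(H :: real mat) \<in> carrier_mat q k"
  shows "pd (1\<^sub>m k + transpose_mat H * minv E * H)"
proof -
  have Ei: "minv E \<in> carrier_mat q q" by (rule minv_inverse(1)[OF assms(2) pd_injective[OF assms(1,2)]])
  have "psd (transpose_mat H * minv E * H)"
    by (rule psd_congruence[OF pd_imp_psd[OF pd_minv[OF assms(1,2)] Ei] Ei assms(3)])
  moreover have "transpose_mat H * minv E * H \<in> carrier_mat k k" using assms(3) Ei by simp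
  ultimately show ?thesis by (rule pd_add_psd[OF pd_one _ one_carrier_mat])
qed

lemma loewner_le_gap:
  assumes K: "K \<in> carrier_mat k k" and L: "(L :: real mat) \<in> carrier_mat d k"
    and \<Phi>2: "\<Phi>2 \<in> carrier_mat d d" and le: "\<Phi>2 \<preceq>\<^sub>L \<Phi>1"
  shows "K - transpose_mat L * \<Phi>1 * L \<preceq>\<^sub>L K - transpose_mat L * \<Phi>2 * L"
  using loewner_le_minus_left[OF loewner_le_congruence[OF le \<Phi>2 L] _ K] L \<Phi>2 by simp

lemma loewner_le_congruence_minv_gap:
  assumes K: "K \<in> carrier_mat k k" and L: "L \<in> carrier_mat d k"
    and \<Phi>1: "\<Phi>1 \<in> carrier_mat d d" and le: "\<Phi>2 \<preceq>\<^sub>L \<Phi>1"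
    and pd_gap: "pd (K - transpose_mat L * \<Phi>1 * L)" and R: "(R :: real mat) \<in> carrier_mat n k"
  shows "R * minv (K - transpose_mat L * \<Phi>2 * L) * transpose_mat R
    \<preceq>\<^sub>L R * minv (K - transpose_mat L * \<Phi>1 * L) * transpose_mat R"
proof -
  have \<Phi>2: "\<Phi>2 \<in> carrier_mat d d" using le \<Phi>1 unfolding loewner_le_def by auto
  have Z1: "K - transpose_mat L * \<Phi>1 * L \<in> carrier_mat k k" by (rule minus_carrier_mat) (use L \<Phi>1 in simp)
  have le_minv: "minv (K - transpose_mat L * \<Phi>2 * L) \<preceq>\<^sub>L minv (K - transpose_mat L * \<Phi>1 * L)"
    by (rule loewner_le_minv[OF pd_gap loewner_le_gap[OF K L \<Phi>2 le] Z1])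
  moreover have "minv (K - transpose_mat L * \<Phi>2 * L) \<in> carrier_mat k k"
    using le_minv minv_inverse(1)[OF Z1 pd_injective[OF pd_gap Z1]]
    unfolding loewner_le_def carrier_mat_def by simp
  ultimately show ?thesis
    using loewner_le_congruence[of _ _ k "transpose_mat R" n] R by simp
qed

lemma loewner_le_congruence_neg_resolvent:
  assumes pd: "pd K" and K: "K \<in> carrier_mat k k" and L: "L \<in> carrier_mat d k"
    and \<Phi>1: "\<Phi>1 \<in> carrier_mat d d" "transpose_mat \<Phi>1 = \<Phi>1"
    and \<Phi>2: "\<Phi>2 \<in> carrier_mat d d" "transpose_mat \<Phi>2 = \<Phi>2"
    and le: "\<Phi>2 \<preceq>\<^sub>L \<Phi>1" and pd_gap: "pd (K - transpose_mat L * \<Phi>1 * L)"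
    and J: "(J :: real mat) \<in> carrier_mat d n" and \<Omega>: "\<Omega> \<in> carrier_mat n n"
  defines "M \<equiv> L * minv K * transpose_mat L"
  shows "\<Omega> + transpose_mat J * (- (\<Phi>1 * minv (1\<^sub>m d - M * \<Phi>1))) * J
    \<preceq>\<^sub>L \<Omega> + transpose_mat J * (- (\<Phi>2 * minv (1\<^sub>m d - M * \<Phi>2))) * J"
proof -
  have Ki: "minv K \<in> carrier_mat k k" by (rule minv_inverse(1)[OF K pd_injective[OF pd K]])
  have M: "M \<in> carrier_mat d d" unfolding M_def using Ki L by simp
  have "psd M"
    using psd_congruence[OF pd_imp_psd[OF pd_minv[OF pd K] Ki] Ki, of "transpose_mat L" d] L
    unfolding M_def by simp
  then have sM: "transpose_mat M = M" using psdD(1) M by blast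
  have gap: "K - transpose_mat L * \<Phi> * L \<in> carrier_mat k k" if "\<Phi> \<in> carrier_mat d d" for \<Phi>
    by (rule minus_carrier_mat) (use L that in simp)
  have pd_gap2: "pd (K - transpose_mat L * \<Phi>2 * L)"
    by (rule pd_loewner_mono[OF pd_gap loewner_le_gap[OF K L \<Phi>2(1) le] gap[OF \<Phi>1(1)]])
  have inverse: "minv (1\<^sub>m d - M * \<Phi>) \<in> carrier_mat d d \<and> (1\<^sub>m d - M * \<Phi>) * minv (1\<^sub>m d - M * \<Phi>) = 1\<^sub>m d"
    if "\<Phi> \<in> carrier_mat d d" "pd (K - transpose_mat L * \<Phi> * L)" for \<Phi>
  proof -
    have "1\<^sub>m d - M * \<Phi> \<in> carrier_mat d d" using M that(1) by (intro minus_carrier_mat) simp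
    from minv_inverse[OF this] show ?thesis
      using one_minus_L_minv_K_Lt_mult_injective[OF pd K L that(1,2)] unfolding M_def by blast
  qed
  have "\<Phi>2 * minv (1\<^sub>m d - M * \<Phi>2) \<preceq>\<^sub>L \<Phi>1 * minv (1\<^sub>m d - M * \<Phi>1)"
  proof (rule loewner_le_mult_resolvent[OF M sM \<Phi>1 \<Phi>2 le])
    show "(M *\<^sub>v v) \<bullet> (\<Phi>1 *\<^sub>v (M *\<^sub>v v)) \<le> v \<bullet> (M *\<^sub>v v)" if "v \<in> carrier_vec d" for v
      using L_minv_K_Lt_dominates_congruence[OF pd K L \<Phi>1(1) pd_imp_psd[OF pd_gap gap[OF \<Phi>1(1)]] that]
      unfolding M_def .
  qed (use inverse[OF \<Phi>1(1) pd_gap] inverse[OF \<Phi>2(1) pd_gap2] in auto)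
  then have "- (\<Phi>1 * minv (1\<^sub>m d - M * \<Phi>1)) \<preceq>\<^sub>L - (\<Phi>2 * minv (1\<^sub>m d - M * \<Phi>2))"
    using loewner_le_uminus inverse[OF \<Phi>2(1) pd_gap2] \<Phi>2(1) by (meson mult_carrier_mat)
  moreover have "- (\<Phi>1 * minv (1\<^sub>m d - M * \<Phi>1)) \<in> carrier_mat d d"
    using inverse[OF \<Phi>1(1) pd_gap] \<Phi>1(1) by simp
  ultimately show ?thesis
    by (intro loewner_le_add_left[OF loewner_le_congruence[OF _ _ J] _ \<Omega>]) (use J in simp_all)
qed

lemma HN_carrier: "HN A B C n m p N \<in> carrier_mat (N * p) (N * m)"
  unfolding HN_def block_mat_def by simp

lemma LN_carrier: "LN A B n m N \<in> carrier_mat (N * n) (N * m)"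
  unfolding LN_def block_mat_def by simp

lemma RN_carrier: "RN A B n m N \<in> carrier_mat n (N * m)"
  unfolding RN_def block_mat_def by (intro carrier_matI) auto

lemma JN_carrier: "JN A B C D n m p N \<in> carrier_mat (N * n) n"
  unfolding JN_def Let_def ON_def block_mat_def using carrier_matD[OF LN_carrier[of A B n m N]]
  by (intro carrier_matI) auto

lemma OmegaN_carrier: "OmegaN A B C D n m p N \<in> carrier_mat n n"
  unfolding OmegaN_def Let_def ON_def block_mat_def by (intro carrier_matI) auto

theorem lemma2:
  fixes A B C D :: "real mat" and n m p N :: nat and Phi1 Phi2 :: "real mat"
  assumes "n > 0" "m > 0" "p > 0" "N > 0"
    and "A \<in> carrier_mat n n" "B \<in> carrier_mat n m" "C \<in> carrier_mat p n" "D \<in> carrier_mat p p"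
    and "0\<^sub>m p p \<prec>\<^sub>L D * transpose_mat D"
    and "Phi1 \<in> carrier_mat (N * n) (N * n)" "Phi2 \<in> carrier_mat (N * n) (N * n)"
    and "transpose_mat Phi1 = Phi1" "transpose_mat Phi2 = Phi2"
    and "0\<^sub>m (N * n) (N * n) \<preceq>\<^sub>L Phi2" "Phi2 \<preceq>\<^sub>L Phi1"
    and "below_phi_tilde (MN A B C D n m p N) (N * n) Phi1"
  shows "OmegaPhi A B C D n m p N Phi1 \<preceq>\<^sub>L OmegaPhi A B C D n m p N Phi2
     \<and> WPhi A B C D n m p N Phi2 \<preceq>\<^sub>L WPhi A B C D n m p N Phi1"
proof -
  define H where "H = HN A B C n m p N"
  define L where "L = LN A B n m N"
  define E where "E = DN D p N * transpose_mat (DN D p N)"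
  define K where "K = 1\<^sub>m (N * m) + transpose_mat H * minv E * H"
  have H: "H \<in> carrier_mat (N * p) (N * m)" and L: "L \<in> carrier_mat (N * n) (N * m)"
    and E: "E \<in> carrier_mat (N * p) (N * p)"
    unfolding H_def L_def E_def using HN_carrier LN_carrier DN_carrier[of D p N] by auto
  have pdE: "pd E"
    unfolding E_def using pd_DN_mult_transpose[OF assms(8) pd_if_zero_loewner_lt[OF assms(9)]] assms(8) by simp
  have pdK: "pd K" unfolding K_def by (rule pd_one_plus_congruence_minv[OF pdE E H])
  have K: "K \<in> carrier_mat (N * m) (N * m)"
    unfolding K_def using H minv_inverse(1)[OF E pd_injective[OF pdE E]] by simp
  have MN: "MN A B C D n m p N = L * minv K * transpose_mat L"
    unfolding MN_def Let_def K_def H_def L_def E_def ..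
  have psd1: "psd Phi1" using psd_loewner_mono[OF psd_if_zero_loewner_le[OF assms(14,11)] assms(15,11)] .
  have pd_gap: "pd (K - transpose_mat L * Phi1 * L)"
    using pd_minus_congruence_if_below_phi_tilde[OF pdK K L _ psd1 assms(10)] assms(1,4,16)
    unfolding MN by simp
  show ?thesis
  proof
    show "OmegaPhi A B C D n m p N Phi1 \<preceq>\<^sub>L OmegaPhi A B C D n m p N Phi2"
      unfolding OmegaPhi_def SinvN_def MN
      by (rule loewner_le_congruence_neg_resolvent[OF pdK K L assms(10,12) assms(11,13) assms(15) pd_gap
            JN_carrier OmegaN_carrier])
    show "WPhi A B C D n m p N Phi2 \<preceq>\<^sub>L WPhi A B C D n m p N Phi1"
      unfolding WPhi_def QN_def Let_def H_def[symmetric] L_def[symmetric] E_def[symmetric] K_def[symmetric]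
      by (rule loewner_le_congruence_minv_gap[OF K L assms(10,15) pd_gap RN_carrier])
  qed
qed

end
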